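(* Let $\kappa$ be a regular uncountable cardinal and suppose that $\rho_2$ is obtained by walking along a $\square^*_{<}(\kappa)$-sequence. Then $T(\rho_2)$ is a special $\kappa$-Aronszajn tree.
   Context: A $C$-sequence over $\kappa$ is $\vec C=\langle C_\delta\mid\delta<\kappa\rangle$, each $C_\delta$ closed in $\delta$ with $\sup(C_\delta)=\sup(\delta)$. It is a $\square^*_{<}(\kappa)$-sequence if it is weakly coherent ($|\{C_\delta\cap\epsilon\mid\delta<\kappa\}|<\kappa$ for every $\epsilon<\kappa$) and the set $R(\vec C)=\{\delta<\kappa\mid\delta\text{ a nonzero limit ordinal},\ \forall\alpha\in(\delta,\kappa)\,[\mathrm{otp}(C_\alpha\cap\delta)<\delta]\}$ contains a club. Walks: $\mathrm{Tr}(\beta,\gamma)(0)=\gamma$, $\mathrm{Tr}(\beta,\gamma)(n)=\min(C_{\mathrm{Tr}(\beta,\gamma)(n-1)}\setminus\beta)$ if $\mathrm{Tr}(\beta,\gamma)(n-1)>\beta$, else $\beta$; $\rho_2(\beta,\gamma)$ least $l$ with $\mathrm{Tr}(\beta,\gamma)(l)=\beta$; $T(\rho_2)=\{\rho_{2\delta}\restriction\gamma\mid\gamma\le\delta<\kappa\}$ under $\subseteq$, $\rho_{2\delta}(\xi)=\rho_2(\xi,\delta)$. A $\kappa$-tree has height $\kappa$ and levels of size $<\kappa$; $\kappa$-Aronszajn: no chain of size $\kappa$; special: there is $f:T\to T$ with $f(x)<_Tx$ for non-minimal $x$ and each $f^{-1}\{z\}$ covered by fewer than $\kappa$ antichains.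 *)

theory Defs
  imports Main "HOL-Library.Countable_Set"
begin

text \<open>The regular cardinal kappa is represented by a well-ordered type 'a:
  the elements of 'a are the ordinals below kappa, ordered by <.\<close>

definition kappa_rel :: "('a::wellorder) rel" where
  "kappa_rel = {(x, y). x \<le> y}"

definition regular_uncountable_cardinal_type :: "('a::wellorder) itself \<Rightarrow> bool" where
  "regular_uncountable_cardinal_type _ \<longleftrightarrow>
     card_order (kappa_rel :: 'a rel) \<and> regularCard (kappa_rel :: 'a rel)
     \<and> \<not> countable (UNIV :: 'a set)"

definition lim_ord :: "'a::wellorder \<Rightarrow> bool" where
  "lim_ord \<delta> \<longleftrightarrow> (\<exists>\<gamma>. \<gamma> < \<delta>) \<and> (\<forall>\<gamma><\<delta>. \<exists>\<eta>. \<gamma> < \<eta> \<and> \<eta> < \<delta>)"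

definition osup :: "'a::wellorder set \<Rightarrow> 'a" where
  "osup X = (LEAST \<alpha>. \<forall>x\<in>X. x \<le> \<alpha>)"

definition ord_iso_on :: "'t set \<Rightarrow> ('t \<Rightarrow> 't \<Rightarrow> bool) \<Rightarrow> ('b::order) set \<Rightarrow> bool" where
  "ord_iso_on A lt B \<longleftrightarrow> (\<exists>f. bij_betw f A B \<and> (\<forall>x\<in>A. \<forall>y\<in>A. lt x y \<longleftrightarrow> f x < f y))"

definition otp_less :: "'a::wellorder set \<Rightarrow> 'a \<Rightarrow> bool" where
  "otp_less X \<delta> \<longleftrightarrow> (\<exists>\<gamma><\<delta>. ord_iso_on X (<) {x. x < \<gamma>})"

definition closed_in_ord :: "'a::wellorder set \<Rightarrow> 'a \<Rightarrow> bool" where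
  "closed_in_ord C \<delta> \<longleftrightarrow>
     (\<forall>\<beta><\<delta>. lim_ord \<beta> \<and> (\<forall>\<gamma><\<beta>. \<exists>c\<in>C. \<gamma> < c \<and> c < \<beta>) \<longrightarrow> \<beta> \<in> C)"

definition C_sequence :: "('a::wellorder \<Rightarrow> 'a set) \<Rightarrow> bool" where
  "C_sequence C \<longleftrightarrow> (\<forall>\<delta>. C \<delta> \<subseteq> {x. x < \<delta>} \<and> closed_in_ord (C \<delta>) \<delta>
                         \<and> osup (C \<delta>) = osup {x. x < \<delta>})"

definition weakly_coherent :: "('a::wellorder \<Rightarrow> 'a set) \<Rightarrow> bool" where
  "weakly_coherent C \<longleftrightarrow>
     (\<forall>\<epsilon>. (card_of {C \<delta> \<inter> {x. x < \<epsilon>} | \<delta>. True}, kappa_rel :: 'a rel) \<in> ordLess)"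

definition R_set :: "('a::wellorder \<Rightarrow> 'a set) \<Rightarrow> 'a set" where
  "R_set C = {\<delta>. lim_ord \<delta> \<and> (\<forall>\<alpha>. \<delta> < \<alpha> \<longrightarrow> otp_less (C \<alpha> \<inter> {x. x < \<delta>}) \<delta>)}"

definition club :: "'a::wellorder set \<Rightarrow> bool" where
  "club D \<longleftrightarrow> (\<forall>\<alpha>. \<exists>\<beta>\<in>D. \<alpha> < \<beta>)
     \<and> (\<forall>\<beta>. lim_ord \<beta> \<and> (\<forall>\<gamma><\<beta>. \<exists>d\<in>D. \<gamma> < d \<and> d < \<beta>) \<longrightarrow> \<beta> \<in> D)"

definition square_star_lt :: "('a::wellorder \<Rightarrow> 'a set) \<Rightarrow> bool" where
  "square_star_lt C \<longleftrightarrow> C_sequence C \<and> weakly_coherent C \<and> (\<exists>D. club D \<and> D \<subseteq> R_set C)"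

fun Tr :: "('a::wellorder \<Rightarrow> 'a set) \<Rightarrow> 'a \<Rightarrow> 'a \<Rightarrow> nat \<Rightarrow> 'a" where
  "Tr C \<beta> \<gamma> 0 = \<gamma>"
| "Tr C \<beta> \<gamma> (Suc n) =
     (if Tr C \<beta> \<gamma> n > \<beta> then (LEAST x. x \<in> C (Tr C \<beta> \<gamma> n) \<and> \<beta> \<le> x) else \<beta>)"

definition rho2 :: "('a::wellorder \<Rightarrow> 'a set) \<Rightarrow> 'a \<Rightarrow> 'a \<Rightarrow> nat" where
  "rho2 C \<beta> \<gamma> = (LEAST l. Tr C \<beta> \<gamma> l = \<beta>)"

definition rho2_node :: "('a::wellorder \<Rightarrow> 'a set) \<Rightarrow> 'a \<Rightarrow> 'a \<Rightarrow> ('a \<Rightarrow> nat option)" where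
  "rho2_node C \<gamma> \<delta> = (\<lambda>\<xi>. if \<xi> < \<gamma> then Some (rho2 C \<xi> \<delta>) else None)"

definition T_rho2 :: "('a::wellorder \<Rightarrow> 'a set) \<Rightarrow> ('a \<Rightarrow> nat option) set" where
  "T_rho2 C = {rho2_node C \<gamma> \<delta> | \<gamma> \<delta>. \<gamma> \<le> \<delta>}"

definition subfun_less :: "('a \<Rightarrow> 'b option) \<Rightarrow> ('a \<Rightarrow> 'b option) \<Rightarrow> bool" where
  "subfun_less f g \<longleftrightarrow> f \<subseteq>\<^sub>m g \<and> f \<noteq> g"

definition tree_pred :: "'t set \<Rightarrow> ('t \<Rightarrow> 't \<Rightarrow> bool) \<Rightarrow> 't \<Rightarrow> 't set" where
  "tree_pred T lt x = {y \<in> T. lt y x}"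

definition is_tree :: "'t set \<Rightarrow> ('t \<Rightarrow> 't \<Rightarrow> bool) \<Rightarrow> bool" where
  "is_tree T lt \<longleftrightarrow>
     (\<forall>x\<in>T. \<not> lt x x) \<and> (\<forall>x\<in>T. \<forall>y\<in>T. \<forall>z\<in>T. lt x y \<and> lt y z \<longrightarrow> lt x z)
     \<and> (\<forall>x\<in>T. (\<forall>y\<in>tree_pred T lt x. \<forall>z\<in>tree_pred T lt x. lt y z \<or> y = z \<or> lt z y)
            \<and> (\<forall>S. S \<subseteq> tree_pred T lt x \<and> S \<noteq> {} \<longrightarrow> (\<exists>m\<in>S. \<forall>s\<in>S. \<not> lt s m)))"

definition tree_level :: "'t set \<Rightarrow> ('t \<Rightarrow> 't \<Rightarrow> bool) \<Rightarrow> 'a::wellorder \<Rightarrow> 't set" where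
  "tree_level T lt \<alpha> = {x \<in> T. ord_iso_on (tree_pred T lt x) lt {\<beta>. \<beta> < \<alpha>}}"

definition kappa_tree :: "'a::wellorder itself \<Rightarrow> 't set \<Rightarrow> ('t \<Rightarrow> 't \<Rightarrow> bool) \<Rightarrow> bool" where
  "kappa_tree _ T lt \<longleftrightarrow> is_tree T lt
     \<and> (\<forall>x\<in>T. \<exists>\<alpha>::'a. x \<in> tree_level T lt \<alpha>)
     \<and> (\<forall>\<alpha>::'a. tree_level T lt \<alpha> \<noteq> {})
     \<and> (\<forall>\<alpha>::'a. (card_of (tree_level T lt \<alpha>), kappa_rel :: 'a rel) \<in> ordLess)"

definition is_chain :: "'t set \<Rightarrow> ('t \<Rightarrow> 't \<Rightarrow> bool) \<Rightarrow> 't set \<Rightarrow> bool" where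
  "is_chain T lt B \<longleftrightarrow> B \<subseteq> T \<and> (\<forall>x\<in>B. \<forall>y\<in>B. lt x y \<or> x = y \<or> lt y x)"

definition is_antichain :: "'t set \<Rightarrow> ('t \<Rightarrow> 't \<Rightarrow> bool) \<Rightarrow> 't set \<Rightarrow> bool" where
  "is_antichain T lt A \<longleftrightarrow> A \<subseteq> T \<and> (\<forall>x\<in>A. \<forall>y\<in>A. x \<noteq> y \<longrightarrow> \<not> lt x y \<and> \<not> lt y x)"

definition kappa_aronszajn :: "'a::wellorder itself \<Rightarrow> 't set \<Rightarrow> ('t \<Rightarrow> 't \<Rightarrow> bool) \<Rightarrow> bool" where
  "kappa_aronszajn k T lt \<longleftrightarrow> kappa_tree k T lt
     \<and> (\<forall>B. is_chain T lt B \<longrightarrow> (card_of B, kappa_rel :: 'a rel) \<notin> ordIso)"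

definition special_tree :: "'a::wellorder itself \<Rightarrow> 't set \<Rightarrow> ('t \<Rightarrow> 't \<Rightarrow> bool) \<Rightarrow> bool" where
  "special_tree _ T lt \<longleftrightarrow>
     (\<exists>f. (\<forall>x\<in>T. f x \<in> T) \<and> (\<forall>x\<in>T. tree_pred T lt x \<noteq> {} \<longrightarrow> lt (f x) x)
        \<and> (\<forall>z\<in>T. \<exists>\<A>. (card_of \<A>, kappa_rel :: 'a rel) \<in> ordLess
                     \<and> (\<forall>A\<in>\<A>. is_antichain T lt A) \<and> {x\<in>T. f x = z} \<subseteq> \<Union>\<A>))"

end

theory Submission
  imports Defs
begin

text \<open>
  The nodes of \<open>T(\<rho>\<^sub>2)\<close> are the restrictions \<open>\<rho>\<^sub>2\<^sub>\<delta>\<restriction>\<gamma>\<close>, so it is a tree whose \<open>\<gamma>\<close>-th level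
  consists of the restrictions to \<open>\<gamma>\<close>. The node \<open>\<rho>\<^sub>2\<^sub>\<delta>\<restriction>\<alpha>\<close> is determined by \<open>\<rho>\<^sub>2(0, \<delta>)\<close> and the
  traces \<open>C\<^sub>t \<inter> \<alpha>\<close> of the clubs met on the walk from \<open>\<delta>\<close> down to \<open>\<alpha>\<close>; by weak coherence there are
  fewer than \<open>\<kappa>\<close> such traces, so the levels are small.

  To specialize the tree fix a club \<open>D \<subseteq> R(C)\<close>. A node \<open>x\<close> of height \<open>\<gamma> \<in> D\<close> takes, above some
  \<open>\<eta> < \<gamma>\<close>, a fixed value \<open>m + 1\<close> exactly on a club \<open>C\<^sub>\<epsilon>\<close> cofinal in \<open>\<gamma>\<close>. The regressive map cuts \<open>x\<close>
  down to \<open>max \<eta> \<zeta>\<close>, where \<open>\<zeta> < \<gamma>\<close>, if it exists, is least such that this fiber of \<open>x\<close> order-embeds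
  below \<open>\<zeta>\<close>. Nodes with the same \<open>(\<eta>, m, \<zeta>)\<close> are incomparable: for \<open>x < y\<close> closure of the club
  of \<open>y\<close> puts \<open>\<gamma>\<close> into the fiber of \<open>y\<close>, which either lowers \<open>\<zeta>\<close> for \<open>x\<close> or, when there is no \<open>\<zeta>\<close>,
  contradicts \<open>\<gamma> \<in> R(C)\<close>. Nodes of height outside \<open>D\<close> are cut down to the last point of \<open>D\<close>
  below them, so those in one fiber lie on fewer than \<open>\<kappa>\<close> levels. A special tree of height \<open>\<kappa>\<close>
  has no branch of size \<open>\<kappa>\<close> by a pressing-down argument.
\<close>

unbundle cardinal_syntax

section \<open>Sets of size less than \<open>\<kappa>\<close>\<close>

locale regular_uncountable =
  assumes regular_uncountable: "regular_uncountable_cardinal_type TYPE('a::wellorder)"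
begin

definition small :: "'b set \<Rightarrow> bool" where
  "small A \<longleftrightarrow> |A| <o (kappa_rel :: 'a rel)"

lemma Card_order_kappa: "Card_order (kappa_rel :: 'a rel)"
  and Field_kappa: "Field (kappa_rel :: 'a rel) = UNIV"
  and regularCard_kappa: "regularCard (kappa_rel :: 'a rel)"
  and uncountable_UNIV: "\<not> countable (UNIV :: 'a set)"
  using regular_uncountable unfolding regular_uncountable_cardinal_type_def
  by (auto simp: card_order_on_def Field_card_order)

lemma infinite_Field_kappa: "\<not> finite (Field (kappa_rel :: 'a rel))"
  unfolding Field_kappa using uncountable_UNIV countable_finite by blast

lemma UNIV_ordIso_kappa: "|UNIV :: 'a set| =o (kappa_rel :: 'a rel)"
  using card_of_Field_ordIso[OF Card_order_kappa] Field_kappa by simp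

lemma small_subset: "A \<subseteq> B \<Longrightarrow> small B \<Longrightarrow> small A"
  unfolding small_def using card_of_mono1 ordLeq_ordLess_trans by blast

lemma small_image: "small A \<Longrightarrow> small (f ` A)"
  unfolding small_def using card_of_image ordLeq_ordLess_trans by blast

lemma small_inj_on: "inj_on f A \<Longrightarrow> small (f ` A) \<Longrightarrow> small A"
  unfolding small_def using card_of_ordLeq[of A "f ` A"] ordLeq_ordLess_trans by blast

lemma small_UN: "small I \<Longrightarrow> (\<And>i. i \<in> I \<Longrightarrow> small (A i)) \<Longrightarrow> small (\<Union>i\<in>I. A i)"
  unfolding small_def
  using stable_UNION[OF regularCard_stable[OF Card_order_kappa infinite_Field_kappa regularCard_kappa]]
  by blast

lemma small_Un: "small A \<Longrightarrow> small B \<Longrightarrow> small (A \<union> B)"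
  unfolding small_def using card_of_Un_ordLess_infinite_Field[OF infinite_Field_kappa Card_order_kappa]
  by blast

lemma small_Times:
  assumes "small A" "small B" shows "small (A \<times> B)"
proof -
  have "A \<times> B = (\<Union>a\<in>A. Pair a ` B)" by auto
  then show ?thesis using small_UN[OF assms(1) small_image[OF assms(2)]] by simp
qed

lemma small_countable:
  assumes "countable A" shows "small A"
proof -
  have "|A| \<le>o |UNIV :: nat set|"
    using assms card_of_ordLeq[of A "UNIV :: nat set"] unfolding countable_def by blast
  moreover have "|UNIV :: nat set| <o |UNIV :: 'a set|"
  proof (rule ccontr)
    assume "\<not> |UNIV :: nat set| <o |UNIV :: 'a set|"
    then have "|UNIV :: 'a set| \<le>o |UNIV :: nat set|"
      using not_ordLess_iff_ordLeq[OF card_of_Well_order card_of_Well_order] by blast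
    then have "countable (UNIV :: 'a set)"
      using card_of_ordLeq[of "UNIV :: 'a set" "UNIV :: nat set"] unfolding countable_def by blast
    then show False using uncountable_UNIV by blast
  qed
  ultimately show ?thesis
    unfolding small_def using UNIV_ordIso_kappa ordLeq_ordLess_trans ordLess_ordIso_trans by blast
qed

lemma small_finite: "finite A \<Longrightarrow> small A"
  using small_countable countable_finite by blast

lemma small_lists_length: "small W \<Longrightarrow> small {l \<in> lists W. length l = n}"
proof (induction n)
  case 0
  have "{l \<in> lists W. length l = 0} = {[]}" by auto
  then show ?case using small_finite[of "{[]}"] by simp
next
  case (Suc n)
  have "{l \<in> lists W. length l = Suc n} = case_prod (#) ` (W \<times> {l \<in> lists W. length l = n})"
    by (auto simp: length_Suc_conv)
  then show ?case
    using small_image[OF small_Times[OF Suc.prems Suc.IH[OF Suc.prems]], of "case_prod (#)"] by simp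
qed

lemma small_lists:
  assumes "small W" shows "small (lists W)"
proof -
  have "small (\<Union>n\<in>(UNIV :: nat set). {l \<in> lists W. length l = n})"
    by (rule small_UN[OF small_countable[OF countableI_type] small_lists_length[OF assms]])
  moreover have "lists W = (\<Union>n. {l \<in> lists W. length l = n})" by auto
  ultimately show ?thesis by simp
qed

lemma small_lessThan: "small {x :: 'a. x < a}"
proof -
  have "underS (kappa_rel :: 'a rel) a = {x. x < a}"
    unfolding underS_def kappa_rel_def by auto
  moreover have "|underS (kappa_rel :: 'a rel) a| <o (kappa_rel :: 'a rel)"
    using card_of_underS[OF Card_order_kappa] Field_kappa by blast
  ultimately show ?thesis unfolding small_def by simp
qed

lemma small_atMost: "small {x :: 'a. x \<le> a}"
proof -
  have "{x. x \<le> a} = {x. x < a} \<union> {a}" by auto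
  then show ?thesis using small_Un[OF small_lessThan small_finite[of "{a}"]] by simp
qed

lemma not_small_UNIV: "\<not> small (UNIV :: 'a set)"
  unfolding small_def using UNIV_ordIso_kappa not_ordLess_ordIso by blast

lemma bounded_imp_small: "\<forall>x\<in>A. x < b \<Longrightarrow> small (A :: 'a set)"
  using small_subset[OF _ small_lessThan] by blast

lemma ex_greater: "\<exists>y. (x :: 'a) < y"
proof (rule ccontr)
  assume "\<nexists>y. x < y"
  then have "UNIV = {y. y \<le> x}" by (auto simp: not_less)
  then show False using small_atMost[of x] not_small_UNIV by simp
qed

lemma small_imp_bounded:
  assumes "small (A :: 'a set)" shows "\<exists>b. \<forall>x\<in>A. x < b"
proof (rule ccontr)
  assume unbounded: "\<nexists>b. \<forall>x\<in>A. x < b"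
  have "cofinal A kappa_rel"
    unfolding cofinal_def kappa_rel_def
  proof
    fix a :: 'a
    obtain a' where "a < a'" using ex_greater by blast
    moreover obtain x where "x \<in> A" "a' \<le> x" using unbounded by (auto simp: not_less)
    ultimately have "x \<in> A" "a < x" by auto
    then show "\<exists>x\<in>A. a \<noteq> x \<and> (a, x) \<in> {(x, y). x \<le> y}" by auto
  qed
  then have "|A| =o (kappa_rel :: 'a rel)"
    using regularCard_kappa Field_kappa unfolding regularCard_def by auto
  then show False using assms unfolding small_def using not_ordLess_ordIso by blast
qed

end

section \<open>Trees of restrictions\<close>

lemma strict_mono_below_ge:
  fixes g :: "'a::wellorder \<Rightarrow> 'a"
  assumes mono: "\<And>x y. x < y \<Longrightarrow> y < a \<Longrightarrow> g x < g y"
  shows "x < a \<Longrightarrow> x \<le> g x"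
proof (induction x rule: less_induct)
  case (less x)
  show ?case
  proof (rule ccontr)
    assume "\<not> x \<le> g x"
    then have "g x < x" by simp
    then have "g x \<le> g (g x)" and "g (g x) < g x"
      using less mono[of "g x" x] by auto
    then show False by simp
  qed
qed

lemma strict_mono_below_into_le:
  fixes g :: "'a::wellorder \<Rightarrow> 'a"
  assumes mono: "\<And>x y. x < y \<Longrightarrow> y < a \<Longrightarrow> g x < g y" and into: "\<And>x. x < a \<Longrightarrow> g x < b"
  shows "a \<le> b"
proof (rule ccontr)
  assume "\<not> a \<le> b"
  then have "b < a" by simp
  then have "b \<le> g b" and "g b < b"
    using strict_mono_below_ge[OF mono] into by auto
  then show False by simp
qed

lemma strict_mono_onto_lessThan_le:
  fixes g :: "'a::wellorder \<Rightarrow> 'a"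
  assumes mono: "\<And>x y. x < y \<Longrightarrow> y < a \<Longrightarrow> g x < g y"
    and onto: "g ` {x. x < a} = {y. y < b}"
  shows "a \<le> b"
proof -
  have into: "g x < b" if "x < a" for x
  proof -
    have "g x \<in> g ` {x. x < a}" using that by simp
    then show ?thesis unfolding onto by simp
  qed
  show ?thesis using strict_mono_below_into_le[OF mono into] .
qed

lemma strict_mono_onto_lessThan_eq:
  fixes g :: "'a::wellorder \<Rightarrow> 'a"
  assumes mono: "\<And>x y. x < y \<Longrightarrow> y < a \<Longrightarrow> g x < g y"
    and onto: "g ` {x. x < a} = {y. y < b}"
  shows "a = b"
proof (rule antisym)
  show "a \<le> b" using strict_mono_onto_lessThan_le[OF mono onto] .
  define h where "h = inv_into {x. x < a} g"
  have h_into: "h y < a" if "y < b" for y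
    using that onto inv_into_into[of y g "{x. x < a}"] unfolding h_def by simp
  have g_h: "g (h y) = y" if "y < b" for y
    using that onto f_inv_into_f[of y g "{x. x < a}"] unfolding h_def by simp
  have h_mono: "h y < h y'" if "y < y'" "y' < b" for y y'
  proof (rule ccontr)
    assume "\<not> h y < h y'"
    moreover have "y < b" using that less_trans by blast
    ultimately consider "h y' = h y" | "h y' < h y" by (auto simp: not_less order.order_iff_strict)
    then have "g (h y') \<le> g (h y)"
    proof cases
      case 2
      then show ?thesis using mono[OF 2 h_into[OF \<open>y < b\<close>]] by simp
    qed simp
    then show False using g_h that \<open>y < b\<close> by simp
  qed
  show "b \<le> a" using strict_mono_below_into_le[OF h_mono h_into] .
qed

definition restr :: "('a::wellorder \<Rightarrow> 'b) \<Rightarrow> 'a \<Rightarrow> 'a \<Rightarrow> 'b option" where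
  "restr h \<gamma> = (\<lambda>\<xi>. if \<xi> < \<gamma> then Some (h \<xi>) else None)"

definition height :: "('a::wellorder \<Rightarrow> 'b option) \<Rightarrow> 'a" where
  "height x = (LEAST \<xi>. x \<xi> = None)"

definition trunc :: "('a::wellorder \<Rightarrow> 'b option) \<Rightarrow> 'a \<Rightarrow> 'a \<Rightarrow> 'b option" where
  "trunc x \<beta> = (\<lambda>\<xi>. if \<xi> < \<beta> then x \<xi> else None)"

definition restr_tree :: "('a::wellorder \<Rightarrow> 'a \<Rightarrow> 'b) \<Rightarrow> ('a \<Rightarrow> 'b option) set" where
  "restr_tree H = {restr (H \<delta>) \<gamma> | \<gamma> \<delta>. \<gamma> \<le> \<delta>}"

lemma T_rho2_eq_restr_tree: "T_rho2 C = restr_tree (\<lambda>\<delta> \<xi>. rho2 C \<xi> \<delta>)"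
  unfolding T_rho2_def restr_tree_def rho2_node_def restr_def by simp

lemma height_restr [simp]: "height (restr h \<gamma>) = \<gamma>"
  unfolding height_def restr_def by (rule Least_equality) (auto simp: not_less split: if_splits)

lemma restr_map_le_iff:
  "restr h \<gamma> \<subseteq>\<^sub>m restr h' \<gamma>' \<longleftrightarrow> \<gamma> \<le> \<gamma>' \<and> (\<forall>\<xi><\<gamma>. h \<xi> = h' \<xi>)"
proof
  assume le: "restr h \<gamma> \<subseteq>\<^sub>m restr h' \<gamma>'"
  have some: "restr h' \<gamma>' \<xi> = Some (h \<xi>)" if "\<xi> < \<gamma>" for \<xi>
  proof -
    have "restr h \<gamma> \<xi> = Some (h \<xi>)" using that unfolding restr_def by simp
    then show ?thesis using le unfolding map_le_def by (metis domI)
  qed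
  have "\<xi> < \<gamma>' \<and> h' \<xi> = h \<xi>" if "\<xi> < \<gamma>" for \<xi>
    using some[OF that] unfolding restr_def by (auto split: if_splits)
  then show "\<gamma> \<le> \<gamma>' \<and> (\<forall>\<xi><\<gamma>. h \<xi> = h' \<xi>)"
    by (metis leI less_irrefl)
qed (auto simp: map_le_def restr_def)

lemma restr_eq_iff: "restr h \<gamma> = restr h' \<gamma>' \<longleftrightarrow> \<gamma> = \<gamma>' \<and> (\<forall>\<xi><\<gamma>. h \<xi> = h' \<xi>)"
proof
  assume "restr h \<gamma> = restr h' \<gamma>'"
  then have "restr h \<gamma> \<subseteq>\<^sub>m restr h' \<gamma>'" "restr h' \<gamma>' \<subseteq>\<^sub>m restr h \<gamma>" by simp_all
  then show "\<gamma> = \<gamma>' \<and> (\<forall>\<xi><\<gamma>. h \<xi> = h' \<xi>)" unfolding restr_map_le_iff by auto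
qed (auto simp: restr_def)

lemma trunc_restr: "\<beta> \<le> \<gamma> \<Longrightarrow> trunc (restr h \<gamma>) \<beta> = restr h \<beta>"
  unfolding trunc_def restr_def by (auto intro!: ext)

lemma trunc_trunc: "\<beta> \<le> \<beta>' \<Longrightarrow> trunc (trunc x \<beta>') \<beta> = trunc x \<beta>"
  unfolding trunc_def by (auto intro!: ext)

lemma restr_treeI: "\<gamma> \<le> \<delta> \<Longrightarrow> restr (H \<delta>) \<gamma> \<in> restr_tree H"
  unfolding restr_tree_def by blast

lemma restr_treeE:
  assumes "x \<in> restr_tree H"
  obtains \<gamma> \<delta> where "\<gamma> \<le> \<delta>" "x = restr (H \<delta>) \<gamma>"
  using assms unfolding restr_tree_def by auto

lemma trunc_in_restr_tree:
  assumes "x \<in> restr_tree H" "\<beta> \<le> height x"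
  shows "trunc x \<beta> \<in> restr_tree H" and "height (trunc x \<beta>) = \<beta>"
proof -
  obtain \<gamma> \<delta> where "\<gamma> \<le> \<delta>" "x = restr (H \<delta>) \<gamma>"
    using assms(1) by (rule restr_treeE)
  moreover from this have "trunc x \<beta> = restr (H \<delta>) \<beta>"
    using assms(2) by (simp add: trunc_restr)
  ultimately show "trunc x \<beta> \<in> restr_tree H" "height (trunc x \<beta>) = \<beta>"
    using assms(2) restr_treeI[of \<beta> \<delta> H] by auto
qed

lemma restr_tree_less_iff:
  assumes "x \<in> restr_tree H" "y \<in> restr_tree H"
  shows "subfun_less x y \<longleftrightarrow> height x < height y \<and> x = trunc y (height x)"
proof -
  obtain \<gamma> \<delta> \<gamma>' \<delta>' where x: "x = restr (H \<delta>) \<gamma>" and y: "y = restr (H \<delta>') \<gamma>'"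
    using assms by (metis restr_treeE)
  have "subfun_less x y \<longleftrightarrow> \<gamma> < \<gamma>' \<and> (\<forall>\<xi><\<gamma>. H \<delta> \<xi> = H \<delta>' \<xi>)"
    unfolding subfun_less_def x y restr_map_le_iff restr_eq_iff by (auto simp: order.order_iff_strict)
  also have "\<dots> \<longleftrightarrow> \<gamma> < \<gamma>' \<and> x = trunc y \<gamma>"
    using x y by (auto simp: trunc_restr restr_eq_iff)
  finally show ?thesis using x y by simp
qed

lemma restr_tree_less_imp_height_less:
  "x \<in> restr_tree H \<Longrightarrow> y \<in> restr_tree H \<Longrightarrow> subfun_less x y \<Longrightarrow> height x < height y"
  using restr_tree_less_iff by blast

lemma restr_tree_pred:
  assumes "x \<in> restr_tree H"
  shows "tree_pred (restr_tree H) subfun_less x = trunc x ` {\<beta>. \<beta> < height x}"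
proof (intro equalityI subsetI)
  fix y assume "y \<in> tree_pred (restr_tree H) subfun_less x"
  then show "y \<in> trunc x ` {\<beta>. \<beta> < height x}"
    unfolding tree_pred_def using restr_tree_less_iff assms by blast
next
  fix y assume "y \<in> trunc x ` {\<beta>. \<beta> < height x}"
  then obtain \<beta> where "\<beta> < height x" "y = trunc x \<beta>" by blast
  then show "y \<in> tree_pred (restr_tree H) subfun_less x"
    unfolding tree_pred_def
    using trunc_in_restr_tree[OF assms, of \<beta>] restr_tree_less_iff[OF _ assms, of y] by auto
qed

lemma trunc_less_trunc:
  assumes "x \<in> restr_tree H" "\<beta> < \<beta>'" "\<beta>' \<le> height x"
  shows "subfun_less (trunc x \<beta>) (trunc x \<beta>')"
proof -
  have "trunc x \<beta> \<in> restr_tree H" "height (trunc x \<beta>) = \<beta>"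
    "trunc x \<beta>' \<in> restr_tree H" "height (trunc x \<beta>') = \<beta>'"
    using assms trunc_in_restr_tree[OF assms(1)] by auto
  then show ?thesis
    using assms(2) trunc_trunc[of \<beta> \<beta>' x] restr_tree_less_iff[of "trunc x \<beta>" H "trunc x \<beta>'"]
    by simp
qed

lemma trunc_eq_if_comparable:
  assumes "x \<in> restr_tree H" "y \<in> restr_tree H" "subfun_less x y \<or> x = y \<or> subfun_less y x"
    and "\<gamma> \<le> height x" "\<gamma> \<le> height y"
  shows "trunc x \<gamma> = trunc y \<gamma>"
  using assms restr_tree_less_iff[OF assms(1,2)] restr_tree_less_iff[OF assms(2,1)]
  by (metis trunc_trunc)

lemma is_tree_restr_tree: "is_tree (restr_tree H) subfun_less"
  unfolding is_tree_def
proof (intro conjI ballI allI impI)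
  fix x assume "x \<in> restr_tree H"
  show "\<not> subfun_less x x" unfolding subfun_less_def by simp
next
  fix x y z assume T: "x \<in> restr_tree H" "y \<in> restr_tree H" "z \<in> restr_tree H"
    and "subfun_less x y \<and> subfun_less y z"
  then have "height x < height y" "height y < height z"
    "x = trunc y (height x)" "y = trunc z (height y)"
    using restr_tree_less_iff by blast+
  then show "subfun_less x z"
    using restr_tree_less_iff[OF T(1,3)] trunc_trunc[of "height x" "height y" z] by simp
next
  fix x y z assume x: "x \<in> restr_tree H"
    and "y \<in> tree_pred (restr_tree H) subfun_less x" "z \<in> tree_pred (restr_tree H) subfun_less x"
  then obtain \<beta> \<beta>' where "\<beta> < height x" "\<beta>' < height x" "y = trunc x \<beta>" "z = trunc x \<beta>'"
    unfolding restr_tree_pred[OF x] by blast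
  then show "subfun_less y z \<or> y = z \<or> subfun_less z y"
    using trunc_less_trunc[OF x] by (cases \<beta> \<beta>' rule: linorder_cases) auto
next
  fix x S assume "x \<in> restr_tree H" and S: "S \<subseteq> tree_pred (restr_tree H) subfun_less x \<and> S \<noteq> {}"
  then have ST: "S \<subseteq> restr_tree H" unfolding tree_pred_def by blast
  obtain s0 where "s0 \<in> S" using S by blast
  define m where "m = (LEAST \<beta>. \<exists>s\<in>S. height s = \<beta>)"
  obtain s where s: "s \<in> S" "height s = m"
    using LeastI[of "\<lambda>\<beta>. \<exists>s\<in>S. height s = \<beta>" "height s0"] \<open>s0 \<in> S\<close> unfolding m_def by blast
  have "m \<le> height s'" if "s' \<in> S" for s'
    unfolding m_def using that by (blast intro: Least_le)
  then have "\<forall>s'\<in>S. \<not> subfun_less s' s"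
    using s ST restr_tree_less_imp_height_less by (metis leD subsetD)
  then show "\<exists>m\<in>S. \<forall>s\<in>S. \<not> subfun_less s m" using s by blast
qed

lemma ord_iso_on_restr_tree_pred:
  assumes x: "x \<in> restr_tree H"
  shows "ord_iso_on (tree_pred (restr_tree H) subfun_less x) subfun_less {\<beta>. \<beta> < height x}"
proof -
  have ht: "height (trunc x \<beta>) = \<beta>" if "\<beta> < height x" for \<beta>
    using trunc_in_restr_tree(2)[OF x] that by simp
  have "bij_betw height (trunc x ` {\<beta>. \<beta> < height x}) {\<beta>. \<beta> < height x}"
  proof (rule bij_betw_byWitness[where f' = "trunc x"])
    show "\<forall>y\<in>trunc x ` {\<beta>. \<beta> < height x}. trunc x (height y) = y"
      using ht by auto
    show "\<forall>\<beta>\<in>{\<beta>. \<beta> < height x}. height (trunc x \<beta>) = \<beta>"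
      using ht by simp
    show "height ` trunc x ` {\<beta>. \<beta> < height x} \<subseteq> {\<beta>. \<beta> < height x}"
      using ht by auto
  qed simp
  moreover have "subfun_less y z \<longleftrightarrow> height y < height z"
    if y: "y \<in> trunc x ` {\<beta>. \<beta> < height x}" and z: "z \<in> trunc x ` {\<beta>. \<beta> < height x}" for y z
  proof -
    obtain \<beta> \<beta>' where b: "\<beta> < height x" "\<beta>' < height x" "y = trunc x \<beta>" "z = trunc x \<beta>'"
      using y z by blast
    then have "y \<in> restr_tree H" "z \<in> restr_tree H" "height y = \<beta>" "height z = \<beta>'"
      using trunc_in_restr_tree[OF x] by auto
    then show ?thesis
      using b trunc_less_trunc[OF x, of \<beta> \<beta>'] restr_tree_less_imp_height_less[of y H z] by auto
  qed
  ultimately show ?thesis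
    unfolding ord_iso_on_def restr_tree_pred[OF x] by (intro exI[of _ height] conjI ballI)
qed

lemma ord_iso_on_restr_tree_pred_height:
  assumes x: "x \<in> restr_tree H"
    and "ord_iso_on (tree_pred (restr_tree H) subfun_less x) subfun_less {\<beta>. \<beta> < \<alpha>}"
  shows "height x = \<alpha>"
proof -
  obtain f where
    f: "bij_betw f (trunc x ` {\<beta>. \<beta> < height x}) {\<beta>. \<beta> < \<alpha>}"
      "\<forall>y\<in>trunc x ` {\<beta>. \<beta> < height x}. \<forall>z\<in>trunc x ` {\<beta>. \<beta> < height x}.
         subfun_less y z \<longleftrightarrow> f y < f z"
    using assms(2) unfolding ord_iso_on_def restr_tree_pred[OF x] by blast
  have onto: "(f \<circ> trunc x) ` {\<beta>. \<beta> < height x} = {\<beta>. \<beta> < \<alpha>}"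
    using f(1) unfolding bij_betw_def by (simp add: image_comp)
  have mono: "(f \<circ> trunc x) \<beta> < (f \<circ> trunc x) \<beta>'" if "\<beta> < \<beta>'" "\<beta>' < height x" for \<beta> \<beta>'
  proof -
    have "\<beta> < height x" using that less_trans by blast
    then have "trunc x \<beta> \<in> trunc x ` {\<beta>. \<beta> < height x}" "trunc x \<beta>' \<in> trunc x ` {\<beta>. \<beta> < height x}"
      using that by simp_all
    moreover have "subfun_less (trunc x \<beta>) (trunc x \<beta>')"
      using trunc_less_trunc[OF x that(1)] that by simp
    ultimately show ?thesis using f(2) by simp
  qed
  show ?thesis using strict_mono_onto_lessThan_eq[OF mono onto] .
qed

lemma tree_level_restr_tree:
  "tree_level (restr_tree H) subfun_less \<alpha> = {x \<in> restr_tree H. height x = \<alpha>}"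
proof (intro equalityI subsetI)
  fix x assume "x \<in> tree_level (restr_tree H) subfun_less \<alpha>"
  then show "x \<in> {x \<in> restr_tree H. height x = \<alpha>}"
    using ord_iso_on_restr_tree_pred_height unfolding tree_level_def by auto
next
  fix x assume "x \<in> {x \<in> restr_tree H. height x = \<alpha>}"
  then show "x \<in> tree_level (restr_tree H) subfun_less \<alpha>"
    using ord_iso_on_restr_tree_pred unfolding tree_level_def by auto
qed

lemma is_antichain_restr_tree_level:
  "is_antichain (restr_tree H) subfun_less {x \<in> restr_tree H. height x = \<beta>}"
proof -
  have "\<not> subfun_less x y" if "x \<in> restr_tree H" "y \<in> restr_tree H" "height x = height y" for x y
    using restr_tree_less_imp_height_less[OF that(1,2)] that(3) by auto
  then show ?thesis unfolding is_antichain_def by auto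
qed

section \<open>Special trees of restrictions have no branch of size \<open>\<kappa>\<close>\<close>

definition nonzero :: "'a::wellorder \<Rightarrow> bool" where
  "nonzero \<beta> \<longleftrightarrow> (\<exists>\<gamma>. \<gamma> < \<beta>)"

context regular_uncountable
begin

text \<open>If all fibers were bounded, iterating \<open>a \<mapsto>\<close> (a bound of the
  fibers over all \<open>\<beta> \<le> a\<close>) \<open>\<omega>\<close> times would reach an ordinal \<open>lim\<close> lying above its own fiber.\<close>
lemma regressive_has_large_fiber:
  fixes g :: "'a \<Rightarrow> 'a"
  assumes regressive: "\<And>\<gamma>. nonzero \<gamma> \<Longrightarrow> g \<gamma> < \<gamma>"
  shows "\<exists>\<beta>. \<not> small {\<gamma>. nonzero \<gamma> \<and> g \<gamma> = \<beta>}"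
proof (rule ccontr)
  assume "\<not> (\<exists>\<beta>. \<not> small {\<gamma>. nonzero \<gamma> \<and> g \<gamma> = \<beta>})"
  then have "\<forall>\<beta>. \<exists>b. \<forall>\<gamma>\<in>{\<gamma>. nonzero \<gamma> \<and> g \<gamma> = \<beta>}. \<gamma> < b"
    using small_imp_bounded by blast
  then obtain bound where bound: "\<And>\<beta> \<gamma>. nonzero \<gamma> \<Longrightarrow> g \<gamma> = \<beta> \<Longrightarrow> \<gamma> < bound \<beta>"
    using choice[of "\<lambda>\<beta> b. \<forall>\<gamma>\<in>{\<gamma>. nonzero \<gamma> \<and> g \<gamma> = \<beta>}. \<gamma> < b"] by auto
  have "\<exists>u. a < u \<and> (\<forall>\<beta>\<le>a. bound \<beta> < u)" for a
  proof -
    have "small ({a} \<union> bound ` {\<beta>. \<beta> \<le> a})"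
      using small_Un[OF small_finite small_image[OF small_atMost]] by blast
    then show ?thesis using small_imp_bounded by blast
  qed
  then obtain next_bound where next_bound: "\<forall>a. a < next_bound a \<and> (\<forall>\<beta>\<le>a. bound \<beta> < next_bound a)"
    using choice[of "\<lambda>a u. a < u \<and> (\<forall>\<beta>\<le>a. bound \<beta> < u)"] by blast
  define a where "a n = (next_bound ^^ n) (LEAST x. True)" for n
  obtain b where "\<forall>x\<in>range a. x < b"
    using small_imp_bounded[OF small_countable[of "range a"]] by blast
  then have ub: "\<exists>u. \<forall>n. a n \<le> u" using less_imp_le by blast
  define lim where "lim = (LEAST u. \<forall>n. a n \<le> u)"
  have a_le: "a n \<le> lim" for n unfolding lim_def using LeastI_ex[OF ub] by blast
  have "a 0 < a 1" using next_bound by (simp add: a_def)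
  then have "nonzero lim" using a_le[of 1] unfolding nonzero_def by (meson less_le_trans)
  then have "g lim < lim" by (rule regressive)
  have "\<exists>n. g lim < a n"
  proof (rule ccontr)
    assume "\<nexists>n. g lim < a n"
    then have "\<forall>n. a n \<le> g lim" by (simp add: not_less)
    then have "lim \<le> g lim" unfolding lim_def by (rule Least_le)
    then show False using \<open>g lim < lim\<close> by simp
  qed
  then obtain n where "g lim < a n" by blast
  have "lim < bound (g lim)" using bound \<open>nonzero lim\<close> by blast
  also have "\<dots> < a (Suc n)"
    using next_bound \<open>g lim < a n\<close> by (simp add: a_def)
  also have "\<dots> \<le> lim" by (rule a_le)
  finally show False by simp
qed

lemma small_chain_if_covered_by_antichains:
  assumes "is_chain T lt X" "X \<subseteq> \<Union>\<A>" "\<forall>A\<in>\<A>. is_antichain T lt A" "small \<A>"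
  shows "small X"
proof -
  have "\<forall>x\<in>X. \<exists>A. A \<in> \<A> \<and> x \<in> A" using assms(2) by blast
  from bchoice[OF this] obtain pick where pick: "\<forall>x\<in>X. pick x \<in> \<A> \<and> x \<in> pick x" by blast
  have "inj_on pick X"
  proof (rule inj_onI)
    fix x y assume xy: "x \<in> X" "y \<in> X" "pick x = pick y"
    have "is_antichain T lt (pick x)" using assms(3) pick xy(1) by blast
    moreover have "x \<in> pick x" "y \<in> pick x" using pick xy by auto
    moreover have "lt x y \<or> x = y \<or> lt y x" using assms(1) xy(1,2) unfolding is_chain_def by blast
    ultimately show "x = y" unfolding is_antichain_def by blast
  qed
  moreover have "small (pick ` X)" using small_subset[OF _ assms(4)] pick by blast
  ultimately show ?thesis by (rule small_inj_on)
qed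

lemma large_chain_unbounded:
  fixes H :: "'a \<Rightarrow> 'a \<Rightarrow> 'b"
  assumes chain: "is_chain (restr_tree H) subfun_less B" and "\<not> small B"
  shows "\<exists>x. x \<in> B \<and> \<gamma> \<le> height x"
proof (rule ccontr)
  assume "\<nexists>x. x \<in> B \<and> \<gamma> \<le> height x"
  then have "small (height ` B)" using bounded_imp_small[of "height ` B" \<gamma>] by (auto simp: not_le)
  moreover have "inj_on height B"
  proof (rule inj_onI)
    fix x y assume "x \<in> B" "y \<in> B" "height x = height y"
    then show "x = y"
      using chain restr_tree_less_imp_height_less[of x H y] restr_tree_less_imp_height_less[of y H x]
      unfolding is_chain_def by auto
  qed
  ultimately show False using \<open>\<not> small B\<close> small_inj_on by blast
qed

lemma large_chain_yields_branch:
  fixes H :: "'a \<Rightarrow> 'a \<Rightarrow> 'b"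
  assumes chain: "is_chain (restr_tree H) subfun_less B" and "\<not> small B"
  obtains b where "\<And>\<gamma>. b \<gamma> \<in> restr_tree H" "\<And>\<gamma>. height (b \<gamma>) = \<gamma>"
    and "\<And>\<gamma> \<gamma>'. \<gamma> < \<gamma>' \<Longrightarrow> subfun_less (b \<gamma>) (b \<gamma>')"
proof -
  have BT: "B \<subseteq> restr_tree H" and cmp: "\<And>x y. x \<in> B \<Longrightarrow> y \<in> B \<Longrightarrow> subfun_less x y \<or> x = y \<or> subfun_less y x"
    using chain unfolding is_chain_def by auto
  have "\<forall>\<gamma>. \<exists>x. x \<in> B \<and> \<gamma> \<le> height x" using large_chain_unbounded[OF assms] by blast
  from choice[OF this] obtain above where "\<forall>\<gamma>. above \<gamma> \<in> B \<and> \<gamma> \<le> height (above \<gamma>)" by blast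
  then have above: "\<And>\<gamma>. above \<gamma> \<in> B" "\<And>\<gamma>. \<gamma> \<le> height (above \<gamma>)" by auto
  have above_T: "above \<gamma> \<in> restr_tree H" for \<gamma> using above(1) BT by blast
  define b where "b \<gamma> = trunc (above \<gamma>) \<gamma>" for \<gamma>
  have b: "b \<gamma> \<in> restr_tree H" "height (b \<gamma>) = \<gamma>" for \<gamma>
    unfolding b_def using trunc_in_restr_tree[OF above_T above(2)] by blast+
  have "subfun_less (b \<gamma>) (b \<gamma>')" if "\<gamma> < \<gamma>'" for \<gamma> \<gamma>'
  proof -
    have "\<gamma> \<le> height (above \<gamma>')"
      using order.trans[OF less_imp_le[OF that] above(2)] .
    then have "b \<gamma> = trunc (above \<gamma>') \<gamma>"
      unfolding b_def
      using trunc_eq_if_comparable[OF above_T above_T cmp[OF above(1) above(1)] above(2)] by blast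
    then have "b \<gamma> = trunc (b \<gamma>') \<gamma>"
      unfolding b_def by (simp only: trunc_trunc[OF less_imp_le[OF that]])
    then show ?thesis unfolding restr_tree_less_iff[OF b(1) b(1)] b(2) using that by simp
  qed
  then show ?thesis using that b by blast
qed

end

lemma is_chain_image_strict_mono:
  fixes b :: "'a::linorder \<Rightarrow> 't"
  assumes "\<And>\<gamma>. b \<gamma> \<in> T" "\<And>\<gamma> \<gamma>'. \<gamma> < \<gamma>' \<Longrightarrow> lt (b \<gamma>) (b \<gamma>')"
  shows "is_chain T lt (b ` X)"
  unfolding is_chain_def
proof (intro conjI ballI)
  show "b ` X \<subseteq> T" using assms(1) by blast
  fix x y assume "x \<in> b ` X" "y \<in> b ` X"
  then obtain \<gamma> \<gamma>' where "x = b \<gamma>" "y = b \<gamma>'" by blast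
  then show "lt x y \<or> x = y \<or> lt y x"
    using assms(2) by (cases \<gamma> \<gamma>' rule: linorder_cases) auto
qed

lemma regressive_on_branch:
  assumes b: "\<And>\<gamma>. b \<gamma> \<in> restr_tree H" "\<And>\<gamma>. height (b \<gamma>) = \<gamma>"
    and b_mono: "\<And>\<gamma> \<gamma>'. \<gamma> < \<gamma>' \<Longrightarrow> subfun_less (b \<gamma>) (b \<gamma>')"
    and f_in: "\<forall>x\<in>restr_tree H. f x \<in> restr_tree H"
    and f_less: "\<forall>x\<in>restr_tree H. tree_pred (restr_tree H) subfun_less x \<noteq> {} \<longrightarrow> subfun_less (f x) x"
    and "nonzero \<gamma>"
  shows "height (f (b \<gamma>)) < \<gamma>" and "f (b \<gamma>) = b (height (f (b \<gamma>)))"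
proof -
  obtain \<beta> where "\<beta> < \<gamma>" using \<open>nonzero \<gamma>\<close> unfolding nonzero_def by blast
  then have "b \<beta> \<in> tree_pred (restr_tree H) subfun_less (b \<gamma>)"
    unfolding tree_pred_def using b b_mono by blast
  then have "subfun_less (f (b \<gamma>)) (b \<gamma>)" using f_less b(1) by blast
  then have lt: "height (f (b \<gamma>)) < \<gamma>" and eq: "f (b \<gamma>) = trunc (b \<gamma>) (height (f (b \<gamma>)))"
    using restr_tree_less_iff[of "f (b \<gamma>)" H "b \<gamma>"] f_in b by auto
  then show "height (f (b \<gamma>)) < \<gamma>" by simp
  have "b (height (f (b \<gamma>))) = trunc (b \<gamma>) (height (f (b \<gamma>)))"
    using b_mono[OF lt] unfolding restr_tree_less_iff[OF b(1) b(1)] b(2) by blast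
  then show "f (b \<gamma>) = b (height (f (b \<gamma>)))" using eq by simp
qed

context regular_uncountable
begin

lemma special_restr_tree_no_large_chain:
  fixes H :: "'a \<Rightarrow> 'a \<Rightarrow> 'b"
  assumes special: "special_tree TYPE('a) (restr_tree H) subfun_less"
    and chain: "is_chain (restr_tree H) subfun_less B"
  shows "\<not> |B| =o (kappa_rel :: 'a rel)"
proof
  assume "|B| =o (kappa_rel :: 'a rel)"
  then have "\<not> small B" unfolding small_def using not_ordLess_ordIso by blast
  then obtain b where b: "\<And>\<gamma>. b \<gamma> \<in> restr_tree H" "\<And>\<gamma>. height (b \<gamma>) = \<gamma>"
    and b_mono: "\<And>\<gamma> \<gamma>'. \<gamma> < \<gamma>' \<Longrightarrow> subfun_less (b \<gamma>) (b \<gamma>')"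
    using large_chain_yields_branch[OF chain] by blast
  from special obtain f where f_in: "\<forall>x\<in>restr_tree H. f x \<in> restr_tree H"
    and f_less: "\<forall>x\<in>restr_tree H. tree_pred (restr_tree H) subfun_less x \<noteq> {} \<longrightarrow> subfun_less (f x) x"
    and f_fibers: "\<forall>z\<in>restr_tree H. \<exists>\<A>. small \<A> \<and> (\<forall>A\<in>\<A>. is_antichain (restr_tree H) subfun_less A)
                       \<and> {x \<in> restr_tree H. f x = z} \<subseteq> \<Union>\<A>"
    unfolding special_tree_def small_def by blast
  define g where "g \<gamma> = height (f (b \<gamma>))" for \<gamma>
  note g = regressive_on_branch[OF b b_mono f_in f_less, folded g_def]
  have "small {\<gamma>. nonzero \<gamma> \<and> g \<gamma> = \<beta>}" for \<beta>
  proof -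
    define F where "F = {\<gamma>. nonzero \<gamma> \<and> g \<gamma> = \<beta>}"
    obtain \<A> where \<A>: "small \<A>" "\<forall>A\<in>\<A>. is_antichain (restr_tree H) subfun_less A"
      "{x \<in> restr_tree H. f x = b \<beta>} \<subseteq> \<Union>\<A>"
      using bspec[OF f_fibers b(1)[of \<beta>]] by blast
    have "b ` F \<subseteq> \<Union>\<A>" using \<A>(3) g(2) b(1) unfolding F_def by auto
    moreover have "is_chain (restr_tree H) subfun_less (b ` F)"
      by (rule is_chain_image_strict_mono[where b = b]) (simp_all add: b b_mono)
    ultimately have "small (b ` F)"
      using small_chain_if_covered_by_antichains \<A>(1,2) by blast
    moreover have "inj_on b F" using b(2) by (metis inj_onI)
    ultimately show ?thesis using small_inj_on unfolding F_def by blast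
  qed
  then show False using regressive_has_large_fiber[of g] g(1) by blast
qed

end

section \<open>Walks along a \<open>C\<close>-sequence\<close>

definition cofinal_below :: "'a::wellorder set \<Rightarrow> 'a \<Rightarrow> bool" where
  "cofinal_below A \<gamma> \<longleftrightarrow> (\<forall>\<beta><\<gamma>. \<exists>c\<in>A. \<beta> < c \<and> c < \<gamma>)"

lemma cofinal_below_mono: "A \<subseteq> B \<Longrightarrow> cofinal_below A \<gamma> \<Longrightarrow> cofinal_below B \<gamma>"
  unfolding cofinal_below_def by blast

lemma lim_ord_nonzero: "lim_ord \<gamma> \<Longrightarrow> nonzero \<gamma>"
  unfolding lim_ord_def nonzero_def by blast

lemma cofinal_below_imp_lim_ord: "nonzero \<gamma> \<Longrightarrow> cofinal_below A \<gamma> \<Longrightarrow> lim_ord \<gamma>"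
  unfolding lim_ord_def nonzero_def cofinal_below_def by blast

lemma osup_upper: "\<forall>x\<in>X. x \<le> b \<Longrightarrow> x \<in> X \<Longrightarrow> x \<le> osup X"
  unfolding osup_def by (rule LeastI2[of _ b]) auto

lemma osup_least: "\<forall>x\<in>X. x \<le> b \<Longrightarrow> osup X \<le> b"
  unfolding osup_def by (rule Least_le) simp

lemma less_osup_imp: "a < osup X \<Longrightarrow> \<exists>x\<in>X. a < x"
  using osup_least[of X a] by (meson leD leI)

lemma Least_above_in_initial_segment:
  fixes A :: "'a::wellorder set"
  assumes "y \<in> A" "y < \<alpha>" "\<xi> \<le> y"
  shows "(LEAST x. x \<in> A \<and> \<xi> \<le> x) = (LEAST x. x \<in> A \<inter> {x. x < \<alpha>} \<and> \<xi> \<le> x)"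
proof -
  have "(LEAST x. x \<in> A \<and> \<xi> \<le> x) \<le> y" using assms by (intro Least_le) simp
  then show ?thesis
    using assms LeastI[of "\<lambda>x. x \<in> A \<and> \<xi> \<le> x" y]
    by (intro Least_equality[symmetric]) (auto intro: Least_le)
qed

lemma Least_above_skip_gap:
  fixes A :: "'a::wellorder set"
  assumes "\<not> (\<exists>y\<in>A. \<xi> \<le> y \<and> y < \<alpha>)" "\<xi> \<le> \<alpha>"
  shows "(LEAST x. x \<in> A \<and> \<xi> \<le> x) = (LEAST x. x \<in> A \<and> \<alpha> \<le> x)"
proof -
  have "x \<in> A \<and> \<xi> \<le> x \<longleftrightarrow> x \<in> A \<and> \<alpha> \<le> x" for x
    using assms by (auto simp: not_less intro: order.trans)
  then show ?thesis by simp
qed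

lemma common_bound_below:
  fixes \<gamma> :: "'a::wellorder" and m :: nat
  assumes "nonzero \<gamma>" "\<And>i. i < m \<Longrightarrow> \<exists>b<\<gamma>. \<forall>c\<in>A i. c < \<gamma> \<longrightarrow> c \<le> b"
  shows "\<exists>\<eta><\<gamma>. \<forall>i<m. \<forall>c\<in>A i. c < \<gamma> \<longrightarrow> c \<le> \<eta>"
  using assms(2)
proof (induction m)
  case 0
  then show ?case using assms(1) unfolding nonzero_def by blast
next
  case (Suc m)
  then obtain \<eta> where \<eta>: "\<eta> < \<gamma>" "\<forall>i<m. \<forall>c\<in>A i. c < \<gamma> \<longrightarrow> c \<le> \<eta>" by auto
  obtain b where b: "b < \<gamma>" "\<forall>c\<in>A m. c < \<gamma> \<longrightarrow> c \<le> b" using Suc.prems by blast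
  have "\<forall>i<Suc m. \<forall>c\<in>A i. c < \<gamma> \<longrightarrow> c \<le> max \<eta> b"
    using \<eta>(2) b(2) by (auto simp: less_Suc_eq le_max_iff_disj)
  moreover have "max \<eta> b < \<gamma>" using \<eta>(1) b(1) by simp
  ultimately show ?case by blast
qed

locale C_seq =
  fixes C :: "'a::wellorder \<Rightarrow> 'a set"
  assumes C_sequence: "C_sequence C"
begin

lemma C_less: "c \<in> C \<delta> \<Longrightarrow> c < \<delta>"
  using C_sequence unfolding C_sequence_def by blast

lemma C_closed: "\<beta> < \<delta> \<Longrightarrow> lim_ord \<beta> \<Longrightarrow> cofinal_below (C \<delta>) \<beta> \<Longrightarrow> \<beta> \<in> C \<delta>"
  using C_sequence unfolding C_sequence_def closed_in_ord_def cofinal_below_def by blast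

lemma C_unbounded:
  assumes "\<beta> < \<delta>" "nonzero \<beta>" shows "\<exists>x\<in>C \<delta>. \<beta> \<le> x"
proof (rule ccontr)
  assume "\<not> (\<exists>x\<in>C \<delta>. \<beta> \<le> x)"
  then have below: "\<forall>x\<in>C \<delta>. x < \<beta>" by (simp add: not_le)
  have "\<forall>x\<in>{x. x < \<delta>}. x \<le> \<delta>" by auto
  then have "\<beta> \<le> osup {x. x < \<delta>}"
    using assms(1) osup_upper by blast
  then have "\<beta> \<le> osup (C \<delta>)"
    using C_sequence unfolding C_sequence_def by simp
  have "cofinal_below (C \<delta>) \<beta>"
    unfolding cofinal_below_def
  proof (intro allI impI)
    fix \<beta>' assume "\<beta>' < \<beta>"
    then obtain c where "c \<in> C \<delta>" "\<beta>' < c"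
      using less_osup_imp \<open>\<beta> \<le> osup (C \<delta>)\<close> by (meson less_le_trans)
    then show "\<exists>c\<in>C \<delta>. \<beta>' < c \<and> c < \<beta>" using below by blast
  qed
  then have "\<beta> \<in> C \<delta>"
    using C_closed assms cofinal_below_imp_lim_ord by blast
  then show False using below by blast
qed

lemma cofinal_below_C_self:
  assumes "lim_ord \<gamma>" shows "cofinal_below (C \<gamma>) \<gamma>"
  unfolding cofinal_below_def
proof (intro allI impI)
  fix \<beta> assume "\<beta> < \<gamma>"
  then obtain \<eta> where "\<beta> < \<eta>" "\<eta> < \<gamma>" using assms unfolding lim_ord_def by blast
  moreover have "nonzero \<eta>" using \<open>\<beta> < \<eta>\<close> unfolding nonzero_def by blast
  ultimately obtain c where "c \<in> C \<gamma>" "\<eta> \<le> c" using C_unbounded by blast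
  then show "\<exists>c\<in>C \<gamma>. \<beta> < c \<and> c < \<gamma>" using \<open>\<beta> < \<eta>\<close> C_less by (meson less_le_trans)
qed

lemma walk_step:
  assumes "\<beta> < \<delta>" "nonzero \<beta>"
  shows "(LEAST x. x \<in> C \<delta> \<and> \<beta> \<le> x) \<in> C \<delta>" and "\<beta> \<le> (LEAST x. x \<in> C \<delta> \<and> \<beta> \<le> x)"
    and "(LEAST x. x \<in> C \<delta> \<and> \<beta> \<le> x) < \<delta>"
proof -
  obtain y where "y \<in> C \<delta> \<and> \<beta> \<le> y" using C_unbounded[OF assms] by blast
  then have "(LEAST x. x \<in> C \<delta> \<and> \<beta> \<le> x) \<in> C \<delta> \<and> \<beta> \<le> (LEAST x. x \<in> C \<delta> \<and> \<beta> \<le> x)"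
    by (rule LeastI)
  then show "(LEAST x. x \<in> C \<delta> \<and> \<beta> \<le> x) \<in> C \<delta>" "\<beta> \<le> (LEAST x. x \<in> C \<delta> \<and> \<beta> \<le> x)"
    "(LEAST x. x \<in> C \<delta> \<and> \<beta> \<le> x) < \<delta>"
    using C_less by auto
qed

lemma Tr_ge: assumes "nonzero \<beta>" "\<beta> \<le> \<gamma>" shows "\<beta> \<le> Tr C \<beta> \<gamma> n"
proof (induction n)
  case (Suc n)
  then show ?case using walk_step(2)[of \<beta> "Tr C \<beta> \<gamma> n"] assms(1) by auto
qed (use assms in simp)

lemma Tr_Suc_less:
  assumes "nonzero \<beta>" "\<beta> < Tr C \<beta> \<gamma> n"
  shows "Tr C \<beta> \<gamma> (Suc n) < Tr C \<beta> \<gamma> n"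
  using walk_step(3)[OF assms(2,1)] assms(2) by simp

lemma Tr_reaches:
  assumes "nonzero \<beta>" "\<beta> \<le> \<gamma>" shows "\<exists>l. Tr C \<beta> \<gamma> l = \<beta>"
proof -
  define m where "m = (LEAST t. t \<in> range (Tr C \<beta> \<gamma>))"
  have "m \<in> range (Tr C \<beta> \<gamma>)" unfolding m_def by (rule LeastI[of _ "Tr C \<beta> \<gamma> 0"]) (rule rangeI)
  then obtain k where k: "Tr C \<beta> \<gamma> k = m" by blast
  have "m \<le> Tr C \<beta> \<gamma> (Suc k)" unfolding m_def by (rule Least_le) (rule rangeI)
  then have "\<not> \<beta> < m" using Tr_Suc_less[OF assms(1), of \<gamma> k] k by auto
  then have "Tr C \<beta> \<gamma> k = \<beta>" using Tr_ge[OF assms, of k] k by (metis antisym not_less)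
  then show ?thesis by blast
qed

lemma Tr_rho2:
  assumes "nonzero \<beta>" "\<beta> \<le> \<gamma>" shows "Tr C \<beta> \<gamma> (rho2 C \<beta> \<gamma>) = \<beta>"
proof -
  obtain l where "Tr C \<beta> \<gamma> l = \<beta>" using Tr_reaches[OF assms] by blast
  then show ?thesis unfolding rho2_def by (rule LeastI)
qed

lemma Tr_less_rho2:
  assumes "nonzero \<beta>" "\<beta> \<le> \<gamma>" "i < rho2 C \<beta> \<gamma>" shows "\<beta> < Tr C \<beta> \<gamma> i"
  using not_less_Least[of i "\<lambda>l. Tr C \<beta> \<gamma> l = \<beta>"] assms Tr_ge[OF assms(1,2), of i]
  unfolding rho2_def by simp

lemma Tr_add: "Tr C \<beta> \<gamma> (n + k) = Tr C \<beta> (Tr C \<beta> \<gamma> n) k"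
  by (induction k) simp_all

lemma rho2_add:
  assumes "nonzero \<beta>" "\<beta> \<le> \<gamma>" "\<And>i. i < n \<Longrightarrow> Tr C \<beta> \<gamma> i \<noteq> \<beta>"
  shows "rho2 C \<beta> \<gamma> = n + rho2 C \<beta> (Tr C \<beta> \<gamma> n)"
  unfolding rho2_def[of C \<beta> \<gamma>]
proof (rule Least_equality)
  show "Tr C \<beta> \<gamma> (n + rho2 C \<beta> (Tr C \<beta> \<gamma> n)) = \<beta>"
    by (simp add: Tr_add Tr_rho2 Tr_ge assms(1,2))
next
  fix l assume l: "Tr C \<beta> \<gamma> l = \<beta>"
  then have "n \<le> l" using assms(3) by (meson not_le)
  then obtain k where k: "l = n + k" using le_Suc_ex by blast
  then have "Tr C \<beta> (Tr C \<beta> \<gamma> n) k = \<beta>" using l by (simp add: Tr_add)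
  then have "rho2 C \<beta> (Tr C \<beta> \<gamma> n) \<le> k" unfolding rho2_def by (rule Least_le)
  then show "n + rho2 C \<beta> (Tr C \<beta> \<gamma> n) \<le> l" using k by simp
qed

lemma rho2_self: "rho2 C \<beta> \<beta> = 0"
  unfolding rho2_def by simp

lemma rho2_Suc:
  assumes "nonzero \<xi>" "\<xi> < \<eta>"
  shows "rho2 C \<xi> \<eta> = Suc (rho2 C \<xi> (LEAST x. x \<in> C \<eta> \<and> \<xi> \<le> x))"
  using rho2_add[of \<xi> \<eta> 1] assms by simp

lemma rho2_eq_1_iff:
  assumes "nonzero \<xi>" "\<xi> < \<eta>" shows "rho2 C \<xi> \<eta> = 1 \<longleftrightarrow> \<xi> \<in> C \<eta>"
proof -
  define L where "L = (LEAST x. x \<in> C \<eta> \<and> \<xi> \<le> x)"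
  have L: "L \<in> C \<eta>" "\<xi> \<le> L" unfolding L_def using walk_step[OF assms(2,1)] by auto
  have "rho2 C \<xi> \<eta> = 1 \<longleftrightarrow> L = \<xi>"
    using rho2_Suc[OF assms] Tr_rho2[OF assms(1) L(2)] rho2_self unfolding L_def[symmetric]
    by (metis One_nat_def Suc_inject Tr.simps(1))
  also have "\<dots> \<longleftrightarrow> \<xi> \<in> C \<eta>"
    using L unfolding L_def by (metis (mono_tags, lifting) Least_le order.antisym order_refl)
  finally show ?thesis .
qed

lemma Tr_agree_while_clubs_avoid:
  assumes "nonzero \<xi>" "\<xi> < \<gamma>"
    and "\<And>i. i < j \<Longrightarrow> \<gamma> < Tr C \<gamma> \<delta> i \<and> (\<forall>c\<in>C (Tr C \<gamma> \<delta> i). c < \<gamma> \<longrightarrow> c < \<xi>)"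
  shows "i \<le> j \<Longrightarrow> Tr C \<xi> \<delta> i = Tr C \<gamma> \<delta> i"
proof (induction i)
  case (Suc i)
  define t where "t = Tr C \<gamma> \<delta> i"
  have t: "\<gamma> < t" "\<forall>c\<in>C t. c < \<gamma> \<longrightarrow> c < \<xi>" using assms(3)[of i] Suc.prems t_def by auto
  have "(LEAST x. x \<in> C t \<and> \<xi> \<le> x) = (LEAST x. x \<in> C t \<and> \<gamma> \<le> x)"
    using t(2) assms(2) by (intro Least_above_skip_gap) (auto simp: not_less)
  moreover have "\<xi> < t" using assms(2) t(1) by (rule less_trans)
  ultimately show ?case using Suc t(1) unfolding t_def by simp
qed simp

end

section \<open>The levels of \<open>T(\<rho>\<^sub>2)\<close> are small\<close>

text \<open>The walk from \<open>\<delta>\<close> down to \<open>\<xi> < \<alpha>\<close> follows the walk from \<open>\<delta>\<close> down to \<open>\<alpha>\<close> until the first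
  club on the way meets \<open>[\<xi>, \<alpha>)\<close>. Hence \<open>\<rho>\<^sub>2(\<xi>, \<delta>)\<close> can be computed from the traces
  \<open>C\<^sub>t \<inter> \<alpha>\<close> of the clubs met on the walk to \<open>\<alpha>\<close>.\<close>

fun rho2_from_trace :: "('a::wellorder \<Rightarrow> 'a set) \<Rightarrow> 'a \<Rightarrow> 'a set list \<Rightarrow> 'a \<Rightarrow> nat" where
  "rho2_from_trace C \<alpha> [] \<xi> = rho2 C \<xi> \<alpha>"
| "rho2_from_trace C \<alpha> (A # As) \<xi> =
     Suc (if \<exists>y\<in>A. \<xi> \<le> y then rho2 C \<xi> (LEAST y. y \<in> A \<and> \<xi> \<le> y) else rho2_from_trace C \<alpha> As \<xi>)"

definition walk_trace :: "('a::wellorder \<Rightarrow> 'a set) \<Rightarrow> 'a \<Rightarrow> 'a \<Rightarrow> 'a set list" where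
  "walk_trace C \<alpha> \<delta> = map (\<lambda>i. C (Tr C \<alpha> \<delta> i) \<inter> {x. x < \<alpha>}) [0..<rho2 C \<alpha> \<delta>]"

lemma not_nonzero_iff: "\<not> nonzero \<xi> \<longleftrightarrow> \<xi> = (LEAST x. True)"
  unfolding nonzero_def by (metis Least_le not_less_Least order.strict_iff_order)

context C_seq
begin

abbreviation rho2_tree :: "('a \<Rightarrow> nat option) set" where
  "rho2_tree \<equiv> restr_tree (\<lambda>\<delta> \<xi>. rho2 C \<xi> \<delta>)"


lemma walk_trace_self: "walk_trace C \<alpha> \<alpha> = []"
  unfolding walk_trace_def rho2_self by simp

lemma walk_trace_step:
  assumes "nonzero \<alpha>" "\<alpha> < \<delta>"
  shows "walk_trace C \<alpha> \<delta> = (C \<delta> \<inter> {x. x < \<alpha>}) # walk_trace C \<alpha> (Tr C \<alpha> \<delta> 1)"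
proof -
  have "rho2 C \<alpha> \<delta> = Suc (rho2 C \<alpha> (Tr C \<alpha> \<delta> 1))"
    using rho2_Suc[OF assms] assms by simp
  moreover have "Tr C \<alpha> \<delta> (Suc i) = Tr C \<alpha> (Tr C \<alpha> \<delta> 1) i" for i
    using Tr_add[of \<alpha> \<delta> 1 i] by simp
  ultimately show ?thesis unfolding walk_trace_def by (simp add: map_upt_Suc del: upt_Suc)
qed

lemma rho2_eq_rho2_from_trace:
  assumes "nonzero \<xi>" "\<xi> < \<alpha>"
  shows "\<alpha> \<le> \<delta> \<Longrightarrow> rho2 C \<xi> \<delta> = rho2_from_trace C \<alpha> (walk_trace C \<alpha> \<delta>) \<xi>"
proof (induction \<delta> rule: less_induct)
  case (less \<delta>)
  show ?case
  proof (cases "\<delta> = \<alpha>")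
    case True
    then show ?thesis by (simp add: walk_trace_self)
  next
    case False
    then have "\<alpha> < \<delta>" using less.prems by simp
    have "nonzero \<alpha>" using assms unfolding nonzero_def by blast
    define \<delta>' where "\<delta>' = Tr C \<alpha> \<delta> 1"
    have \<delta>': "\<delta>' = (LEAST x. x \<in> C \<delta> \<and> \<alpha> \<le> x)" "\<delta>' < \<delta>" "\<alpha> \<le> \<delta>'"
      unfolding \<delta>'_def using \<open>\<alpha> < \<delta>\<close> walk_step[OF \<open>\<alpha> < \<delta>\<close> \<open>nonzero \<alpha>\<close>] by auto
    have "rho2 C \<xi> \<delta> = Suc (rho2 C \<xi> (LEAST x. x \<in> C \<delta> \<and> \<xi> \<le> x))"
      using rho2_Suc[OF assms(1)] assms(2) \<open>\<alpha> < \<delta>\<close> by (meson less_trans)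
    moreover have "walk_trace C \<alpha> \<delta> = (C \<delta> \<inter> {x. x < \<alpha>}) # walk_trace C \<alpha> \<delta>'"
      unfolding \<delta>'_def using walk_trace_step[OF \<open>nonzero \<alpha>\<close> \<open>\<alpha> < \<delta>\<close>] .
    moreover have "(LEAST x. x \<in> C \<delta> \<and> \<xi> \<le> x) = (LEAST x. x \<in> C \<delta> \<inter> {x. x < \<alpha>} \<and> \<xi> \<le> x)"
      if "\<exists>y\<in>C \<delta> \<inter> {x. x < \<alpha>}. \<xi> \<le> y"
      using that Least_above_in_initial_segment by blast
    moreover have "(LEAST x. x \<in> C \<delta> \<and> \<xi> \<le> x) = \<delta>'"
      if "\<not> (\<exists>y\<in>C \<delta> \<inter> {x. x < \<alpha>}. \<xi> \<le> y)"
      unfolding \<delta>'(1) using that assms(2) by (intro Least_above_skip_gap) auto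
    moreover have "rho2 C \<xi> \<delta>' = rho2_from_trace C \<alpha> (walk_trace C \<alpha> \<delta>') \<xi>"
      using less.IH \<delta>'(2,3) by blast
    ultimately show ?thesis by auto
  qed
qed

lemma rho2_determined_by_trace:
  assumes "\<alpha> \<le> \<delta>" "\<alpha> \<le> \<delta>'" "walk_trace C \<alpha> \<delta> = walk_trace C \<alpha> \<delta>'"
    and "rho2 C (LEAST x. True) \<delta> = rho2 C (LEAST x. True) \<delta>'" "\<xi> < \<alpha>"
  shows "rho2 C \<xi> \<delta> = rho2 C \<xi> \<delta>'"
proof (cases "nonzero \<xi>")
  case True
  then show ?thesis using rho2_eq_rho2_from_trace[OF True assms(5)] assms(1-3) by simp
next
  case False
  then have "\<xi> = (LEAST x. True)" using not_nonzero_iff by blast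
  then show ?thesis using assms(4) by (simp only:)
qed

end

locale square_walk =
  fixes C :: "'a::wellorder \<Rightarrow> 'a set"
  assumes regular: "regular_uncountable_cardinal_type TYPE('a)"
    and square: "square_star_lt C"

sublocale square_walk \<subseteq> C_seq C
  using square unfolding square_star_lt_def by unfold_locales blast

sublocale square_walk \<subseteq> regular_uncountable
  using regular by unfold_locales

context square_walk
begin

lemma small_tree_level: "small (tree_level rho2_tree subfun_less (\<alpha> :: 'a))"
proof -
  define W where "W = {C \<delta> \<inter> {x. x < \<alpha>} | \<delta>. True}"
  define key where "key \<delta> = (rho2 C (LEAST x. True) \<delta>, walk_trace C \<alpha> \<delta>)" for \<delta>
  define node where "node k = restr (\<lambda>\<xi>. rho2 C \<xi> (SOME \<delta>. \<alpha> \<le> \<delta> \<and> key \<delta> = k)) \<alpha>" for k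
  have "tree_level rho2_tree subfun_less \<alpha> \<subseteq> node ` (UNIV \<times> lists W)"
  proof
    fix x assume "x \<in> tree_level rho2_tree subfun_less \<alpha>"
    then obtain \<gamma> \<delta> where "\<gamma> \<le> \<delta>" "x = restr (\<lambda>\<xi>. rho2 C \<xi> \<delta>) \<gamma>" "height x = \<alpha>"
      unfolding tree_level_restr_tree by (auto elim: restr_treeE)
    then have \<delta>: "\<alpha> \<le> \<delta>" "x = restr (\<lambda>\<xi>. rho2 C \<xi> \<delta>) \<alpha>" by auto
    have key_in: "key \<delta> \<in> UNIV \<times> lists W" unfolding key_def walk_trace_def W_def by auto
    define \<delta>' where "\<delta>' = (SOME \<delta>'. \<alpha> \<le> \<delta>' \<and> key \<delta>' = key \<delta>)"
    have \<delta>': "\<alpha> \<le> \<delta>'" "key \<delta>' = key \<delta>"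
      using someI[of "\<lambda>\<delta>'. \<alpha> \<le> \<delta>' \<and> key \<delta>' = key \<delta>" \<delta>] \<delta>(1) unfolding \<delta>'_def by auto
    then have "\<forall>\<xi><\<alpha>. rho2 C \<xi> \<delta>' = rho2 C \<xi> \<delta>"
      using rho2_determined_by_trace[OF \<delta>'(1) \<delta>(1)] unfolding key_def by auto
    then have "x = node (key \<delta>)"
      unfolding node_def \<delta>'_def[symmetric] \<delta>(2) restr_eq_iff by simp
    then show "x \<in> node ` (UNIV \<times> lists W)" using key_in by (rule image_eqI)
  qed
  moreover have "small W"
    using square unfolding square_star_lt_def weakly_coherent_def small_def W_def by blast
  then have "small ((UNIV :: nat set) \<times> lists W)"
    by (rule small_Times[OF small_countable[OF countableI_type] small_lists])
  ultimately show ?thesis using small_subset small_image by blast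
qed

lemma kappa_tree_rho2_tree: "kappa_tree TYPE('a) rho2_tree subfun_less"
  unfolding kappa_tree_def
proof (intro conjI allI ballI)
  show "is_tree rho2_tree subfun_less" by (rule is_tree_restr_tree)
next
  fix x assume "x \<in> rho2_tree"
  then show "\<exists>\<alpha>::'a. x \<in> tree_level rho2_tree subfun_less \<alpha>"
    unfolding tree_level_restr_tree by blast
next
  fix \<alpha> :: 'a
  have "restr (\<lambda>\<xi>. rho2 C \<xi> \<alpha>) \<alpha> \<in> tree_level rho2_tree subfun_less \<alpha>"
    unfolding tree_level_restr_tree using restr_treeI[of \<alpha> \<alpha>] by simp
  then show "tree_level rho2_tree subfun_less \<alpha> \<noteq> {}" by blast
next
  fix \<alpha> :: 'a
  show "|tree_level rho2_tree subfun_less \<alpha>| <o (kappa_rel :: 'a rel)"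
    using small_tree_level unfolding small_def .
qed

end

section \<open>Specializing \<open>T(\<rho>\<^sub>2)\<close>\<close>

definition embeds_below :: "'a::wellorder set \<Rightarrow> 'a \<Rightarrow> bool" where
  "embeds_below A \<zeta> \<longleftrightarrow> (\<exists>g. (\<forall>a\<in>A. \<forall>b\<in>A. a < b \<longrightarrow> g a < g b) \<and> (\<forall>a\<in>A. g a < \<zeta>))"

lemma embeds_below_initial_part:
  assumes "embeds_below B \<zeta>" "A \<subseteq> B" "\<gamma> \<in> B" "\<forall>a\<in>A. a < \<gamma>"
  shows "\<exists>\<zeta>'<\<zeta>. embeds_below A \<zeta>'"
proof -
  obtain g where g: "\<forall>a\<in>B. \<forall>b\<in>B. a < b \<longrightarrow> g a < g b" "\<forall>a\<in>B. g a < \<zeta>"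
    using assms(1) unfolding embeds_below_def by blast
  have "embeds_below A (g \<gamma>)"
    unfolding embeds_below_def using g(1) assms(2-4) by blast
  moreover have "g \<gamma> < \<zeta>" using g(2) assms(3) by blast
  ultimately show ?thesis by blast
qed

lemma otp_less_imp_embeds_below:
  assumes "otp_less B \<gamma>" "A \<subseteq> B"
  shows "\<exists>\<zeta><\<gamma>. embeds_below A \<zeta>"
proof -
  obtain \<zeta> h where \<zeta>: "\<zeta> < \<gamma>" "bij_betw h B {x. x < \<zeta>}" "\<forall>a\<in>B. \<forall>b\<in>B. a < b \<longleftrightarrow> h a < h b"
    using assms(1) unfolding otp_less_def ord_iso_on_def by blast
  have "\<forall>a\<in>A. h a < \<zeta>" using \<zeta>(2) assms(2) unfolding bij_betw_def by blast
  then have "embeds_below A \<zeta>"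
    unfolding embeds_below_def using \<zeta>(3) assms(2) by blast
  then show ?thesis using \<zeta>(1) by blast
qed

context C_seq
begin

lemma rho2_through_Tr:
  assumes "nonzero \<xi>" "\<xi> < \<gamma>" "\<gamma> \<le> \<delta>" "m \<le> rho2 C \<gamma> \<delta>"
    and below: "\<And>i c. i < m \<Longrightarrow> c \<in> C (Tr C \<gamma> \<delta> i) \<Longrightarrow> c < \<gamma> \<Longrightarrow> c < \<xi>"
  shows "rho2 C \<xi> \<delta> = m + rho2 C \<xi> (Tr C \<gamma> \<delta> m)"
proof -
  have "nonzero \<gamma>" using assms(2) unfolding nonzero_def by blast
  have above: "\<gamma> < Tr C \<gamma> \<delta> i" if "i < m" for i
    using Tr_less_rho2[OF \<open>nonzero \<gamma>\<close> assms(3)] that assms(4) by simp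
  have same: "Tr C \<xi> \<delta> i = Tr C \<gamma> \<delta> i" if "i \<le> m" for i
    using Tr_agree_while_clubs_avoid[OF assms(1,2), of m] above below that by blast
  have "Tr C \<xi> \<delta> i \<noteq> \<xi>" if "i < m" for i
    using same[of i] above[OF that] assms(2) that by simp
  then show ?thesis
    using rho2_add[OF assms(1), of \<delta> m] same[of m] assms(2,3) by simp
qed

definition traces_ladder :: "('a \<Rightarrow> nat option) \<Rightarrow> 'a \<Rightarrow> nat \<Rightarrow> bool" where
  "traces_ladder x \<eta> m \<longleftrightarrow> \<eta> < height x \<and> (\<exists>\<epsilon>. height x \<le> \<epsilon> \<and> cofinal_below (C \<epsilon>) (height x)
     \<and> (\<forall>\<xi>. \<eta> < \<xi> \<and> \<xi> < height x \<longrightarrow> (x \<xi> = Some (Suc m) \<longleftrightarrow> \<xi> \<in> C \<epsilon>)))"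

text \<open>Walking from \<open>\<delta>\<close> down to a limit \<open>\<gamma>\<close>, let \<open>\<epsilon>\<close> be the first point of the walk whose
  club is cofinal in \<open>\<gamma>\<close>. The clubs met before \<open>\<epsilon>\<close> are bounded below \<open>\<gamma>\<close>, say by \<open>\<eta>\<close>, so
  above \<open>\<eta>\<close> all walks from \<open>\<delta>\<close> pass through \<open>\<epsilon>\<close>, and \<open>\<rho>\<^sub>2\<close> takes its minimal value there
  exactly on \<open>C\<^sub>\<epsilon>\<close>.\<close>
lemma ex_traces_ladder:
  assumes x: "x \<in> rho2_tree" and lim: "lim_ord (height x)"
  shows "\<exists>\<eta> m. traces_ladder x \<eta> m"
proof -
  define \<gamma> where "\<gamma> = height x"
  obtain \<delta> where \<delta>: "\<gamma> \<le> \<delta>" "x = restr (\<lambda>\<xi>. rho2 C \<xi> \<delta>) \<gamma>"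
    using x unfolding \<gamma>_def by (auto elim: restr_treeE)
  have "nonzero \<gamma>" using lim lim_ord_nonzero unfolding \<gamma>_def by blast
  have "cofinal_below (C (Tr C \<gamma> \<delta> (rho2 C \<gamma> \<delta>))) \<gamma>"
    using cofinal_below_C_self lim Tr_rho2[OF \<open>nonzero \<gamma>\<close> \<delta>(1)] unfolding \<gamma>_def by simp
  then obtain m where m: "cofinal_below (C (Tr C \<gamma> \<delta> m)) \<gamma>" "m \<le> rho2 C \<gamma> \<delta>"
    and before: "\<And>i. i < m \<Longrightarrow> \<not> cofinal_below (C (Tr C \<gamma> \<delta> i)) \<gamma>"
    using ex_least_nat_le[of "\<lambda>i. cofinal_below (C (Tr C \<gamma> \<delta> i)) \<gamma>"] by blast
  have "\<exists>b<\<gamma>. \<forall>c\<in>C (Tr C \<gamma> \<delta> i). c < \<gamma> \<longrightarrow> c \<le> b" if "i < m" for i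
    using before[OF that] unfolding cofinal_below_def by (meson not_le)
  then obtain \<eta> where \<eta>: "\<eta> < \<gamma>" "\<forall>i<m. \<forall>c\<in>C (Tr C \<gamma> \<delta> i). c < \<gamma> \<longrightarrow> c \<le> \<eta>"
    using common_bound_below[OF \<open>nonzero \<gamma>\<close>, of m "\<lambda>i. C (Tr C \<gamma> \<delta> i)"] by blast
  define \<epsilon> where "\<epsilon> = Tr C \<gamma> \<delta> m"
  have "\<gamma> \<le> \<epsilon>" unfolding \<epsilon>_def using Tr_ge[OF \<open>nonzero \<gamma>\<close> \<delta>(1)] .
  have "x \<xi> = Some (Suc m) \<longleftrightarrow> \<xi> \<in> C \<epsilon>" if \<xi>: "\<eta> < \<xi>" "\<xi> < \<gamma>" for \<xi>
  proof -
    have "nonzero \<xi>" using \<xi>(1) unfolding nonzero_def by blast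
    have "rho2 C \<xi> \<delta> = m + rho2 C \<xi> \<epsilon>"
      unfolding \<epsilon>_def using \<xi> \<delta>(1) m(2) \<eta>(2)
      by (intro rho2_through_Tr[OF \<open>nonzero \<xi>\<close>]) (auto intro: le_less_trans)
    moreover have "x \<xi> = Some (rho2 C \<xi> \<delta>)" using \<delta>(2) \<xi>(2) unfolding restr_def by simp
    moreover have "\<xi> < \<epsilon>" using \<xi>(2) \<open>\<gamma> \<le> \<epsilon>\<close> by simp
    ultimately show ?thesis using rho2_eq_1_iff[OF \<open>nonzero \<xi>\<close>] by simp
  qed
  then have "traces_ladder x \<eta> m"
    unfolding traces_ladder_def \<gamma>_def[symmetric] using \<eta>(1) \<open>\<gamma> \<le> \<epsilon>\<close> m(1) \<epsilon>_def by blast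
  then show ?thesis by blast
qed

definition ladder :: "('a \<Rightarrow> nat option) \<Rightarrow> 'a \<times> nat" where
  "ladder x = (SOME (\<eta>, m). traces_ladder x \<eta> m)"

lemma traces_ladder_ladder:
  assumes "x \<in> rho2_tree" "lim_ord (height x)"
  shows "traces_ladder x (fst (ladder x)) (snd (ladder x))"
proof -
  obtain \<eta> m where "traces_ladder x \<eta> m" using ex_traces_ladder[OF assms] by blast
  then have "case_prod (traces_ladder x) (ladder x)"
    unfolding ladder_def by (intro someI[of "case_prod (traces_ladder x)" "(\<eta>, m)"]) simp
  then show ?thesis by (simp add: case_prod_beta)
qed

definition ladder_fiber :: "('a \<Rightarrow> nat option) \<Rightarrow> 'a set" where
  "ladder_fiber x = {\<xi>. fst (ladder x) < \<xi> \<and> \<xi> < height x \<and> x \<xi> = Some (Suc (snd (ladder x)))}"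

lemma cofinal_below_ladder_fiber:
  assumes "x \<in> rho2_tree" "lim_ord (height x)"
  shows "cofinal_below (ladder_fiber x) (height x)"
  unfolding cofinal_below_def
proof (intro allI impI)
  fix \<beta> assume "\<beta> < height x"
  obtain \<epsilon> where \<epsilon>: "cofinal_below (C \<epsilon>) (height x)"
    "\<And>\<xi>. fst (ladder x) < \<xi> \<Longrightarrow> \<xi> < height x \<Longrightarrow> x \<xi> = Some (Suc (snd (ladder x))) \<longleftrightarrow> \<xi> \<in> C \<epsilon>"
    and "fst (ladder x) < height x"
    using traces_ladder_ladder[OF assms] unfolding traces_ladder_def by blast
  then have "max \<beta> (fst (ladder x)) < height x" using \<open>\<beta> < height x\<close> by simp
  then obtain c where c: "c \<in> C \<epsilon>" "max \<beta> (fst (ladder x)) < c" "c < height x"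
    using \<epsilon>(1) unfolding cofinal_below_def by blast
  then have "c \<in> ladder_fiber x" unfolding ladder_fiber_def using \<epsilon>(2) by simp
  then show "\<exists>c\<in>ladder_fiber x. \<beta> < c \<and> c < height x" using c by auto
qed

text \<open>If \<open>x < y\<close> share their ladder, the fiber of \<open>x\<close> is an initial part of the fiber
  of \<open>y\<close>, which lies on a single club \<open>C\<^sub>\<epsilon>\<close>; being cofinal in \<open>height x\<close>, it puts
  \<open>height x\<close> itself into \<open>C\<^sub>\<epsilon>\<close>, hence into the fiber of \<open>y\<close>.\<close>
lemma ladder_fiber_extends:
  assumes x: "x \<in> rho2_tree" "lim_ord (height x)" and y: "y \<in> rho2_tree" "lim_ord (height y)"
    and same: "ladder x = ladder y" and less: "subfun_less x y"
  shows "ladder_fiber x \<subseteq> ladder_fiber y" "height x \<in> ladder_fiber y"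
    and "\<exists>\<epsilon>. height x < \<epsilon> \<and> ladder_fiber x \<subseteq> C \<epsilon>"
proof -
  define \<eta> where "\<eta> = fst (ladder x)"
  define m where "m = snd (ladder x)"
  have lt: "height x < height y" and eq: "x = trunc y (height x)"
    using less restr_tree_less_iff[OF x(1) y(1)] by auto
  have agree: "x \<xi> = y \<xi>" if "\<xi> < height x" for \<xi>
    using that by (subst eq) (simp add: trunc_def)
  have "\<eta> < height x" using traces_ladder_ladder[OF x] unfolding traces_ladder_def \<eta>_def by blast
  obtain \<epsilon> where \<epsilon>: "height y \<le> \<epsilon>"
    "\<And>\<xi>. \<eta> < \<xi> \<Longrightarrow> \<xi> < height y \<Longrightarrow> y \<xi> = Some (Suc m) \<longleftrightarrow> \<xi> \<in> C \<epsilon>"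
    using traces_ladder_ladder[OF y] same unfolding traces_ladder_def \<eta>_def m_def by auto
  have fiber_x: "ladder_fiber x = {\<xi>. \<eta> < \<xi> \<and> \<xi> < height x \<and> x \<xi> = Some (Suc m)}"
    unfolding ladder_fiber_def \<eta>_def m_def ..
  have fiber_y: "ladder_fiber y = {\<xi>. \<eta> < \<xi> \<and> \<xi> < height y \<and> y \<xi> = Some (Suc m)}"
    unfolding ladder_fiber_def \<eta>_def m_def same ..
  show sub: "ladder_fiber x \<subseteq> ladder_fiber y"
    unfolding fiber_x fiber_y using agree lt by (auto intro: less_trans)
  have "height x < \<epsilon>" using lt \<epsilon>(1) by simp
  moreover have "ladder_fiber x \<subseteq> C \<epsilon>" using sub \<epsilon>(2) unfolding fiber_y by blast
  ultimately show "\<exists>\<epsilon>. height x < \<epsilon> \<and> ladder_fiber x \<subseteq> C \<epsilon>" by blast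
  have "cofinal_below (C \<epsilon>) (height x)"
    using cofinal_below_mono[OF \<open>ladder_fiber x \<subseteq> C \<epsilon>\<close> cofinal_below_ladder_fiber[OF x]] .
  then have "height x \<in> C \<epsilon>" using C_closed \<open>height x < \<epsilon>\<close> x(2) by blast
  then show "height x \<in> ladder_fiber y"
    unfolding fiber_y using \<epsilon>(2) \<open>\<eta> < height x\<close> lt by simp
qed

end

context square_walk
begin

definition D :: "'a set" where
  "D = (SOME D. club D \<and> D \<subseteq> R_set C)"

lemma club_D: "club D" and D_subset_R_set: "D \<subseteq> R_set C"
proof -
  have "\<exists>D. club D \<and> D \<subseteq> R_set C" using square unfolding square_star_lt_def by blast
  then have "club D \<and> D \<subseteq> R_set C" unfolding D_def by (rule someI_ex)
  then show "club D" "D \<subseteq> R_set C" by auto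
qed

lemma lim_ord_D: "\<gamma> \<in> D \<Longrightarrow> lim_ord \<gamma>"
  using D_subset_R_set unfolding R_set_def by blast

lemma otp_less_D: "\<gamma> \<in> D \<Longrightarrow> \<gamma> < \<alpha> \<Longrightarrow> otp_less (C \<alpha> \<inter> {x. x < \<gamma>}) \<gamma>"
  using D_subset_R_set unfolding R_set_def by blast

definition next_D :: "'a \<Rightarrow> 'a" where
  "next_D c = (LEAST y. y \<in> D \<and> c < y)"

lemma next_D: "next_D c \<in> D" "c < next_D c"
proof -
  obtain y where "y \<in> D \<and> c < y" using club_D unfolding club_def by blast
  then have "next_D c \<in> D \<and> c < next_D c" unfolding next_D_def by (rule LeastI)
  then show "next_D c \<in> D" "c < next_D c" by auto
qed

lemma osup_D_less:
  assumes "nonzero \<gamma>" "\<gamma> \<notin> D" shows "osup (D \<inter> {x. x < \<gamma>}) < \<gamma>"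
proof (rule ccontr)
  assume "\<not> osup (D \<inter> {x. x < \<gamma>}) < \<gamma>"
  moreover have "osup (D \<inter> {x. x < \<gamma>}) \<le> \<gamma>" by (rule osup_least) auto
  ultimately have eq: "osup (D \<inter> {x. x < \<gamma>}) = \<gamma>" by simp
  have "cofinal_below D \<gamma>"
    unfolding cofinal_below_def
  proof (intro allI impI)
    fix \<beta> assume "\<beta> < \<gamma>"
    then show "\<exists>c\<in>D. \<beta> < c \<and> c < \<gamma>" using less_osup_imp[of \<beta> "D \<inter> {x. x < \<gamma>}"] eq by auto
  qed
  then have "\<gamma> \<in> D"
    using club_D cofinal_below_imp_lim_ord[OF assms(1)] unfolding club_def cofinal_below_def by blast
  then show False using assms(2) by blast
qed

lemma less_next_D_osup:
  assumes "nonzero \<gamma>" "\<gamma> \<notin> D" shows "\<gamma> < next_D (osup (D \<inter> {x. x < \<gamma>}))"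
proof (rule ccontr)
  define c where "c = osup (D \<inter> {x. x < \<gamma>})"
  assume "\<not> \<gamma> < next_D (osup (D \<inter> {x. x < \<gamma>}))"
  then have "next_D c < \<gamma>" using next_D(1) assms(2) unfolding c_def by (metis le_neq_trans not_less)
  moreover have "\<forall>x\<in>D \<inter> {x. x < \<gamma>}. x \<le> \<gamma>" by auto
  ultimately have "next_D c \<le> c"
    using next_D(1) osup_upper[of "D \<inter> {x. x < \<gamma>}" \<gamma> "next_D c"] unfolding c_def by blast
  then show False using next_D(2)[of c] by simp
qed

definition fiber_bound :: "('a \<Rightarrow> nat option) \<Rightarrow> 'a option" where
  "fiber_bound x = (if \<exists>\<zeta><height x. embeds_below (ladder_fiber x) \<zeta>
     then Some (LEAST \<zeta>. embeds_below (ladder_fiber x) \<zeta>) else None)"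

definition regress_cut :: "('a \<Rightarrow> nat option) \<Rightarrow> 'a" where
  "regress_cut x = (case fiber_bound x of None \<Rightarrow> fst (ladder x) | Some \<zeta> \<Rightarrow> max (fst (ladder x)) \<zeta>)"

definition regress :: "('a \<Rightarrow> nat option) \<Rightarrow> 'a \<Rightarrow> nat option" where
  "regress x = (if \<not> nonzero (height x) then x
     else if height x \<in> D then trunc x (regress_cut x) else trunc x (osup (D \<inter> {y. y < height x})))"

lemma fiber_bound_less: "fiber_bound x = Some \<zeta> \<Longrightarrow> \<zeta> < height x"
  unfolding fiber_bound_def by (auto split: if_splits intro: Least_le le_less_trans)

lemma regress_cut_less:
  assumes "x \<in> rho2_tree" "height x \<in> D" shows "regress_cut x < height x"
  using traces_ladder_ladder[OF assms(1) lim_ord_D[OF assms(2)]] fiber_bound_less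
  unfolding regress_cut_def traces_ladder_def by (auto split: option.splits)

text \<open>If the fiber of \<open>y\<close> embeds below \<open>\<zeta>\<close>, then, as it contains \<open>height x\<close>, the fiber of \<open>x\<close>
  embeds below some \<open>\<zeta>' < \<zeta>\<close>; otherwise \<open>height x \<in> R(C)\<close> gives an embedding below \<open>height x\<close>.\<close>
lemma same_ladder_and_bound_incomparable:
  assumes x: "x \<in> rho2_tree" "height x \<in> D" and y: "y \<in> rho2_tree" "height y \<in> D"
    and same: "ladder x = ladder y" "fiber_bound x = fiber_bound y"
  shows "\<not> subfun_less x y"
proof
  assume less: "subfun_less x y"
  note extends = ladder_fiber_extends[OF x(1) lim_ord_D[OF x(2)] y(1) lim_ord_D[OF y(2)] same(1) less]
  have below: "\<forall>a\<in>ladder_fiber x. a < height x" unfolding ladder_fiber_def by blast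
  show False
  proof (cases "fiber_bound x")
    case None
    obtain \<epsilon> where "height x < \<epsilon>" "ladder_fiber x \<subseteq> C \<epsilon>" using extends(3) by blast
    then have "ladder_fiber x \<subseteq> C \<epsilon> \<inter> {a. a < height x}" using below by blast
    then obtain \<zeta> where "\<zeta> < height x" "embeds_below (ladder_fiber x) \<zeta>"
      using otp_less_imp_embeds_below otp_less_D[OF x(2) \<open>height x < \<epsilon>\<close>] by blast
    then show False using None unfolding fiber_bound_def by (auto split: if_splits)
  next
    case (Some \<zeta>)
    then have "fiber_bound y = Some \<zeta>" using same(2) by simp
    then have "embeds_below (ladder_fiber y) \<zeta>"
      unfolding fiber_bound_def by (auto split: if_splits intro: LeastI)
    then obtain \<zeta>' where "\<zeta>' < \<zeta>" "embeds_below (ladder_fiber x) \<zeta>'"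
      using embeds_below_initial_part extends(1,2) below by blast
    moreover have "\<zeta> = (LEAST \<zeta>. embeds_below (ladder_fiber x) \<zeta>)"
      using Some unfolding fiber_bound_def by (auto split: if_splits)
    ultimately show False using Least_le[of "embeds_below (ladder_fiber x)" \<zeta>'] by simp
  qed
qed

lemma regress_in_tree_and_less:
  assumes x: "x \<in> rho2_tree"
  shows "regress x \<in> rho2_tree" and "nonzero (height x) \<Longrightarrow> subfun_less (regress x) x"
proof -
  have trunc_below: "trunc x c \<in> rho2_tree" "subfun_less (trunc x c) x" if "c < height x" for c
    using trunc_in_restr_tree[OF x less_imp_le[OF that]] restr_tree_less_iff[OF _ x] that
      trunc_trunc[of c c x]
    by auto
  have ex: "\<exists>c<height x. regress x = trunc x c" if "nonzero (height x)"
    using that regress_cut_less[OF x] osup_D_less[OF that] unfolding regress_def by auto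
  show "subfun_less (regress x) x" if nz: "nonzero (height x)"
  proof -
    obtain c where "c < height x" "regress x = trunc x c" using ex[OF nz] by blast
    then show ?thesis using trunc_below(2) by simp
  qed
  show "regress x \<in> rho2_tree"
  proof (cases "nonzero (height x)")
    case True
    then obtain c where "c < height x" "regress x = trunc x c" using ex by blast
    then show ?thesis using trunc_below(1) by simp
  next
    case False
    then show ?thesis using x unfolding regress_def by simp
  qed
qed

lemma is_antichain_same_ladder_and_bound:
  "is_antichain rho2_tree subfun_less {x \<in> rho2_tree. height x \<in> D \<and> (ladder x, fiber_bound x) = d}"
proof -
  have "\<not> subfun_less x y"
    if "x \<in> {x \<in> rho2_tree. height x \<in> D \<and> (ladder x, fiber_bound x) = d}"
      "y \<in> {x \<in> rho2_tree. height x \<in> D \<and> (ladder x, fiber_bound x) = d}" for x y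
    using that same_ladder_and_bound_incomparable[of x y] by auto
  then show ?thesis unfolding is_antichain_def by auto
qed

lemma ladder_and_bound_below_regress:
  assumes x: "x \<in> rho2_tree" and "nonzero (height x)" "height x \<in> D"
  shows "fst (ladder x) \<le> height (regress x)"
    and "fiber_bound x = Some \<zeta> \<Longrightarrow> \<zeta> \<le> height (regress x)"
proof -
  have "height (regress x) = regress_cut x"
    using assms trunc_in_restr_tree(2)[OF x] regress_cut_less[OF x] unfolding regress_def by simp
  then show "fst (ladder x) \<le> height (regress x)" "fiber_bound x = Some \<zeta> \<Longrightarrow> \<zeta> \<le> height (regress x)"
    unfolding regress_cut_def by (auto split: option.splits)
qed

lemma height_le_next_D_regress:
  assumes x: "x \<in> rho2_tree" and "\<not> (nonzero (height x) \<and> height x \<in> D)"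
  shows "height x \<le> next_D (height (regress x))"
proof (cases "nonzero (height x)")
  case True
  define \<sigma> where "\<sigma> = osup (D \<inter> {y. y < height x})"
  have "height x \<notin> D" "regress x = trunc x \<sigma>"
    using assms True unfolding regress_def \<sigma>_def by auto
  moreover have "\<sigma> < height x" unfolding \<sigma>_def using osup_D_less True \<open>height x \<notin> D\<close> by blast
  ultimately have "height (regress x) = \<sigma>" using trunc_in_restr_tree(2)[OF x] by simp
  then show ?thesis using less_next_D_osup[OF True \<open>height x \<notin> D\<close>] unfolding \<sigma>_def by simp
next
  case False
  then show ?thesis using next_D(2)[of "height x"] unfolding regress_def by simp
qed

lemma regress_fiber_covered:
  assumes z: "z \<in> rho2_tree"
  shows "\<exists>\<A>. small \<A> \<and> (\<forall>A\<in>\<A>. is_antichain rho2_tree subfun_less A) \<and> {x \<in> rho2_tree. regress x = z} \<subseteq> \<Union>\<A>"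
proof -
  define c where "c = height z"
  define level where "level \<beta> = {x \<in> rho2_tree. height x = \<beta>}" for \<beta>
  define same_data where "same_data d = {x \<in> rho2_tree. height x \<in> D \<and> (ladder x, fiber_bound x) = d}" for d
  define P where "P = ({\<beta>. \<beta> \<le> c} \<times> (UNIV :: nat set)) \<times> insert None (Some ` {\<beta>. \<beta> \<le> c})"
  define \<A> where "\<A> = level ` {\<beta>. \<beta> \<le> next_D c} \<union> same_data ` P"
  have "insert None (Some ` {\<beta>. \<beta> \<le> c}) = {None} \<union> Some ` {\<beta>. \<beta> \<le> c}" by simp
  then have "small (insert None (Some ` {\<beta>. \<beta> \<le> c}))"
    using small_Un[OF small_finite[of "{None}"] small_image[OF small_atMost]] by simp
  then have "small P"
    unfolding P_def by (rule small_Times[OF small_Times[OF small_atMost small_countable[OF countableI_type]]])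
  then have "small \<A>"
    unfolding \<A>_def by (rule small_Un[OF small_image[OF small_atMost] small_image])
  moreover have "is_antichain rho2_tree subfun_less A" if "A \<in> \<A>" for A
    using that is_antichain_restr_tree_level is_antichain_same_ladder_and_bound
    unfolding \<A>_def level_def same_data_def by blast
  moreover have "x \<in> \<Union>\<A>" if x: "x \<in> rho2_tree" "regress x = z" for x
  proof (cases "nonzero (height x) \<and> height x \<in> D")
    case True
    then have "(ladder x, fiber_bound x) \<in> P"
      using ladder_and_bound_below_regress[OF x(1)] x(2) unfolding P_def c_def
      by (cases "fiber_bound x") (auto simp: mem_Times_iff)
    then have "same_data (ladder x, fiber_bound x) \<in> \<A>" unfolding \<A>_def by (intro UnI2 imageI)
    moreover have "x \<in> same_data (ladder x, fiber_bound x)" unfolding same_data_def using x(1) True by simp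
    ultimately show ?thesis by (rule UnionI)
  next
    case False
    then have "level (height x) \<in> \<A>"
      using height_le_next_D_regress[OF x(1)] x(2) unfolding \<A>_def c_def by (intro UnI1 imageI) simp
    moreover have "x \<in> level (height x)" unfolding level_def using x(1) by simp
    ultimately show ?thesis by (rule UnionI)
  qed
  ultimately show ?thesis by blast
qed

lemma special_rho2_tree: "special_tree TYPE('a) rho2_tree subfun_less"
  unfolding special_tree_def small_def[symmetric]
proof (intro exI[of _ regress] conjI ballI impI)
  fix x assume "x \<in> rho2_tree"
  then show "regress x \<in> rho2_tree" by (rule regress_in_tree_and_less)
next
  fix x assume x: "x \<in> rho2_tree" and "tree_pred rho2_tree subfun_less x \<noteq> {}"
  then have "nonzero (height x)" unfolding restr_tree_pred[OF x] nonzero_def by blast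
  then show "subfun_less (regress x) x" by (rule regress_in_tree_and_less[OF x])
next
  fix z assume "z \<in> rho2_tree"
  then show "\<exists>\<A>. small \<A> \<and> (\<forall>A\<in>\<A>. is_antichain rho2_tree subfun_less A)
      \<and> {x \<in> rho2_tree. regress x = z} \<subseteq> \<Union>\<A>"
    by (rule regress_fiber_covered)
qed

end

theorem corollary7p4:
  fixes C :: "'a::wellorder \<Rightarrow> 'a set"
  assumes "regular_uncountable_cardinal_type TYPE('a)"
    and "square_star_lt C"
  shows "kappa_aronszajn TYPE('a) (T_rho2 C) subfun_less
       \<and> special_tree TYPE('a) (T_rho2 C) subfun_less"
proof -
  interpret square_walk C using assms by unfold_locales
  have special: "special_tree TYPE('a) rho2_tree subfun_less" by (rule special_rho2_tree)
  then have "\<not> |B| =o (kappa_rel :: 'a rel)" if "is_chain rho2_tree subfun_less B" for B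
    using special_restr_tree_no_large_chain that by blast
  then have "kappa_aronszajn TYPE('a) rho2_tree subfun_less"
    unfolding kappa_aronszajn_def using kappa_tree_rho2_tree by blast
  with special show ?thesis unfolding T_rho2_eq_restr_tree by blast
qed

end
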